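(* For every interval forecast $I\subseteq(0,1)$ with rational endpoints, there is a recursive enumeration of all test supermartingales for $I$ generated by lower semicomputable non-negative real supermartingale multipliers for $I$: there is a recursive map $q:\mathbb N_0\times\mathbb S\times\mathbb N_0\to\mathbb Q$, non-decreasing in its last argument, such that each $T_i(s)=\lim_{n\to\infty}q(i,s,n)$ equals $D_i^{\circledcirc}$ for some lower semicomputable non-negative real supermartingale multiplier $D_i$ for $I$ (so each $T_i$ is a lower semicomputable test supermartingale for $I$), and for every lower semicomputable non-negative real supermartingale multiplier $D$ for $I$ there is an $i$ with $D^{\circledcirc}=T_i$.
   Context: $\mathcal X=\{0,1\}$, $\mathbb S=\bigcup_{n\ge0}\mathcal X^n$ (finite binary strings), $\square$ the empty string. Interval forecasts are nonempty closed intervals $I\subseteq[0,1]$; $\overline E_I(f)=\max_{p\in I}[pf(1)+(1-p)f(0)]$. A real multiplier process $D$ maps $\mathbb S$ to gambles $\mathcal X\to\mathbb R$; it is a supermartingale multiplier for $I$ if $\overline E_I(D(s))\le1$ for all $s$; lower semicomputable if there is a recursive $r:\mathbb S\times\mathcal X\times\mathbb N_0\to\mathbb Q$ non-decreasing in the last argument with $D(s)(x)=\lim_nr(s,x,n)$. It generates $D^{\circledcirc}(x_1,\dots,x_n)=\prod_{k=0}^{n-1}D(x_{1:k})(x_{k+1})$ (with $D^{\circledcirc}(\square)=1$). A test supermartingale for $I$ is $T:\mathbb S\to\mathbb R_{\ge0}$ with $T(\square)=1$ and $\overline E_I(T(s\,\cdot)-T(s))\le0$ for all $s$; it is lower semicomputable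 if it is the limit of a recursive rational sequence non-decreasing in the approximation index. *)

theory Defs
  imports "HOL-Analysis.Analysis"
begin

datatype recf = Zero | Succ | Proj nat | Comp recf "recf list" | Prec recf recf | Mini recf

inductive eval :: "recf \<Rightarrow> nat list \<Rightarrow> nat \<Rightarrow> bool" where
  eval_Zero: "eval Zero xs 0"
| eval_Succ: "eval Succ (x # xs) (Suc x)"
| eval_Proj: "i < length xs \<Longrightarrow> eval (Proj i) xs (xs ! i)"
| eval_Comp: "list_all2 (\<lambda>g y. eval g xs y) gs ys \<Longrightarrow> eval f ys z \<Longrightarrow> eval (Comp f gs) xs z"
| eval_Prec0: "eval f xs y \<Longrightarrow> eval (Prec f g) (0 # xs) y"
| eval_PrecS: "eval (Prec f g) (n # xs) y \<Longrightarrow> eval g (n # y # xs) z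
               \<Longrightarrow> eval (Prec f g) (Suc n # xs) z"
| eval_Mini: "eval f (n # xs) 0 \<Longrightarrow> (\<forall>m<n. \<exists>y. eval f (m # xs) y \<and> 0 < y)
               \<Longrightarrow> eval (Mini f) xs n"

definition recursive_nat :: "nat \<Rightarrow> (nat list \<Rightarrow> nat) \<Rightarrow> bool" where
  "recursive_nat k f \<longleftrightarrow> (\<exists>c. \<forall>xs. length xs = k \<longrightarrow> eval c xs (f xs))"

definition recursive_rat :: "nat \<Rightarrow> (nat list \<Rightarrow> rat) \<Rightarrow> bool" where
  "recursive_rat k f \<longleftrightarrow> (\<exists>u v w. recursive_nat k u \<and> recursive_nat k v \<and> recursive_nat k w \<and>
     (\<forall>xs. length xs = k \<longrightarrow> f xs = (of_nat (u xs) - of_nat (v xs)) / of_nat (w xs + 1)))"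

text \<open>Standard bijective coding of finite binary strings (True = 1, False = 0) by naturals
  (bijective base-2 numeration, the first symbol being least significant).\<close>
fun str_code :: "bool list \<Rightarrow> nat" where
  "str_code [] = 0"
| "str_code (x # s) = 2 * str_code s + (if x then 2 else 1)"

text \<open>Outcome space X = {0,1} is modelled by bool (True = 1); finite strings by bool list,
  where s ! k is the (k+1)-st symbol and take k s = x_{1:k}.\<close>

definition upper_exp :: "real set \<Rightarrow> (bool \<Rightarrow> real) \<Rightarrow> real" where
  "upper_exp I f = (SUP p\<in>I. p * f True + (1 - p) * f False)"

definition supermartingale_multiplier :: "real set \<Rightarrow> (bool list \<Rightarrow> bool \<Rightarrow> real) \<Rightarrow> bool" where
  "supermartingale_multiplier I D \<longleftrightarrow> (\<forall>s. upper_exp I (D s) \<le> 1)"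

definition nonneg_multiplier :: "(bool list \<Rightarrow> bool \<Rightarrow> real) \<Rightarrow> bool" where
  "nonneg_multiplier D \<longleftrightarrow> (\<forall>s x. 0 \<le> D s x)"

definition lower_semicomputable_multiplier :: "(bool list \<Rightarrow> bool \<Rightarrow> real) \<Rightarrow> bool" where
  "lower_semicomputable_multiplier D \<longleftrightarrow>
     (\<exists>r :: bool list \<Rightarrow> bool \<Rightarrow> nat \<Rightarrow> rat.
        (\<exists>g. recursive_rat 3 g \<and> (\<forall>s x n. r s x n = g [str_code s, of_bool x, n])) \<and>
        (\<forall>s x. mono (r s x)) \<and>
        (\<forall>s x. (\<lambda>n. real_of_rat (r s x n)) \<longlonglongrightarrow> D s x))"

definition generated :: "(bool list \<Rightarrow> bool \<Rightarrow> real) \<Rightarrow> bool list \<Rightarrow> real" where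
  "generated D s = (\<Prod>k<length s. D (take k s) (s ! k))"

definition test_supermartingale :: "real set \<Rightarrow> (bool list \<Rightarrow> real) \<Rightarrow> bool" where
  "test_supermartingale I T \<longleftrightarrow> T [] = 1 \<and> (\<forall>s. 0 \<le> T s) \<and>
     (\<forall>s. upper_exp I (\<lambda>x. T (s @ [x]) - T s) \<le> 0)"

end

theory Submission
  imports Defs "HOL-Library.Nat_Bijection"
begin

text \<open>A lower semicomputable multiplier is given by three programs computing its rational
  approximations (u - v)/(w + 1), so codes i of program triples can serve as indices. Running the
  triple i for n steps (with certified evaluation, a form of Kleene's normal form theorem) yields
  finitely many of its approximations; the stage-n multiplier is the largest one in the longest
  initial segment that still satisfies the supermartingale condition, which need only be checked
  at the endpoints of I because it is affine in the probability. The stages are recursive,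
  increasing in n and bounded, so their limits are lower semicomputable supermartingale
  multipliers; and if the triple i represents a supermartingale multiplier D, every initial
  segment is eventually known and admissible, so the limit is D itself. Products along the
  prefixes of s give the enumeration.\<close>

section \<open>Closure properties of the recursive functions\<close>

definition recursive_pred :: "nat \<Rightarrow> (nat list \<Rightarrow> bool) \<Rightarrow> bool" where
  "recursive_pred k P \<longleftrightarrow> recursive_nat k (\<lambda>xs. if P xs then 1 else 0)"

named_theorems recursive_intros

lemma recursive_nat_cong:
  "recursive_nat k f \<Longrightarrow> (\<And>xs. length xs = k \<Longrightarrow> f xs = g xs) \<Longrightarrow> recursive_nat k g"
  unfolding recursive_nat_def by metis

lemma recursive_pred_cong:
  "recursive_pred k P \<Longrightarrow> (\<And>xs. length xs = k \<Longrightarrow> P xs = Q xs) \<Longrightarrow> recursive_pred k Q"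
  unfolding recursive_pred_def by (erule recursive_nat_cong) simp

lemma recursive_nat_zero: "recursive_nat k (\<lambda>_. 0)"
  unfolding recursive_nat_def by (auto intro: eval_Zero)

lemma recursive_nat_proj [recursive_intros]: "i < k \<Longrightarrow> recursive_nat k (\<lambda>xs. xs ! i)"
  unfolding recursive_nat_def by (auto intro: eval_Proj)

lemma recursive_succ: "recursive_nat 1 (\<lambda>xs. Suc (xs ! 0))"
  unfolding recursive_nat_def
proof (intro exI allI impI)
  fix xs :: "nat list"
  assume "length xs = 1"
  then obtain x where "xs = [x]"
    by (cases xs) auto
  then show "eval Succ xs (Suc (xs ! 0))"
    by (auto intro: eval_Succ)
qed

lemma recursive_nat_comp:
  assumes h: "recursive_nat m h" and len: "length gs = m" and gs: "\<forall>g\<in>set gs. recursive_nat k g"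
  shows "recursive_nat k (\<lambda>xs. h (map (\<lambda>g. g xs) gs))"
proof -
  obtain ch where ch: "\<forall>xs. length xs = m \<longrightarrow> eval ch xs (h xs)"
    using h unfolding recursive_nat_def by auto
  define program where "program g = (SOME c. \<forall>xs. length xs = k \<longrightarrow> eval c xs (g xs))" for g
  have program: "eval (program g) xs (g xs)" if "g \<in> set gs" "length xs = k" for g xs
    using someI_ex[OF gs[rule_format, OF that(1), unfolded recursive_nat_def]] that(2)
    unfolding program_def by blast
  show ?thesis
    unfolding recursive_nat_def
  proof (intro exI allI impI)
    fix xs :: "nat list"
    assume xs: "length xs = k"
    have "list_all2 (\<lambda>c y. eval c xs y) (map program gs) (map (\<lambda>g. g xs) gs)"
      using program xs by (auto simp: list_all2_conv_all_nth)
    moreover have "eval ch (map (\<lambda>g. g xs) gs) (h (map (\<lambda>g. g xs) gs))"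
      using ch len by auto
    ultimately show "eval (Comp ch (map program gs)) xs (h (map (\<lambda>g. g xs) gs))"
      by (rule eval_Comp)
  qed
qed

lemma recursive_nat_comp1:
  "recursive_nat 1 (\<lambda>ys. F (ys ! 0)) \<Longrightarrow> recursive_nat k f \<Longrightarrow> recursive_nat k (\<lambda>xs. F (f xs))"
  using recursive_nat_comp[of 1 "\<lambda>ys. F (ys ! 0)" "[f]" k] by simp

lemma recursive_nat_comp2:
  "recursive_nat 2 (\<lambda>ys. F (ys ! 0) (ys ! 1)) \<Longrightarrow> recursive_nat k f \<Longrightarrow> recursive_nat k g \<Longrightarrow>
    recursive_nat k (\<lambda>xs. F (f xs) (g xs))"
  using recursive_nat_comp[of 2 "\<lambda>ys. F (ys ! 0) (ys ! 1)" "[f, g]" k] by simp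

lemma recursive_nat_comp3:
  "recursive_nat 3 (\<lambda>ys. F (ys ! 0) (ys ! 1) (ys ! 2)) \<Longrightarrow>
    recursive_nat k f \<Longrightarrow> recursive_nat k g \<Longrightarrow> recursive_nat k h \<Longrightarrow>
    recursive_nat k (\<lambda>xs. F (f xs) (g xs) (h xs))"
  using recursive_nat_comp[of 3 "\<lambda>ys. F (ys ! 0) (ys ! 1) (ys ! 2)" "[f, g, h]" k] by simp

lemma recursive_nat_comp4:
  "recursive_nat 4 (\<lambda>ys. F (ys ! 0) (ys ! 1) (ys ! 2) (ys ! 3)) \<Longrightarrow>
    recursive_nat k f \<Longrightarrow> recursive_nat k g \<Longrightarrow> recursive_nat k h \<Longrightarrow> recursive_nat k l \<Longrightarrow>
    recursive_nat k (\<lambda>xs. F (f xs) (g xs) (h xs) (l xs))"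
  using recursive_nat_comp[of 4 "\<lambda>ys. F (ys ! 0) (ys ! 1) (ys ! 2) (ys ! 3)" "[f, g, h, l]" k]
  by simp

lemma recursive_nat_comp5:
  "recursive_nat 5 (\<lambda>ys. F (ys ! 0) (ys ! 1) (ys ! 2) (ys ! 3) (ys ! 4)) \<Longrightarrow>
    recursive_nat k f \<Longrightarrow> recursive_nat k g \<Longrightarrow> recursive_nat k h \<Longrightarrow> recursive_nat k l \<Longrightarrow>
    recursive_nat k m \<Longrightarrow> recursive_nat k (\<lambda>xs. F (f xs) (g xs) (h xs) (l xs) (m xs))"
  using recursive_nat_comp[of 5 "\<lambda>ys. F (ys ! 0) (ys ! 1) (ys ! 2) (ys ! 3) (ys ! 4)"
      "[f, g, h, l, m]" k]
  by simp

lemma recursive_nat_Suc [recursive_intros]: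
  "recursive_nat k f \<Longrightarrow> recursive_nat k (\<lambda>xs. Suc (f xs))"
  by (rule recursive_nat_comp1[OF recursive_succ])

lemma recursive_nat_const [recursive_intros]: "recursive_nat k (\<lambda>_. c)"
  by (induction c) (auto intro: recursive_nat_zero recursive_nat_Suc)

lemma recursive_nat_reindex:
  assumes "recursive_nat m h" "length is = m" "\<forall>i\<in>set is. i < k"
  shows "recursive_nat k (\<lambda>xs. h (map (\<lambda>i. xs ! i) is))"
  using recursive_nat_comp[OF assms(1), of "map (\<lambda>i xs. xs ! i) is" k] assms(2,3)
  by (auto intro: recursive_nat_proj simp: comp_def)

lemma recursive_nat_Cons:
  assumes "recursive_nat (Suc k) h" "recursive_nat k N"
  shows "recursive_nat k (\<lambda>xs. h (N xs # xs))"
proof -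
  have "recursive_nat k (\<lambda>xs. h (map (\<lambda>g. g xs) (N # map (\<lambda>i xs. xs ! i) [0..<k])))"
    by (rule recursive_nat_comp) (use assms recursive_nat_proj in auto)
  then show ?thesis
    by (rule recursive_nat_cong) (simp add: comp_def, metis map_nth)
qed

lemma recursive_nat_prim_rec:
  assumes f: "recursive_nat k f" and g: "recursive_nat (Suc (Suc k)) g"
    and F: "\<And>xs. F 0 xs = f xs" "\<And>n xs. F (Suc n) xs = g (n # F n xs # xs)"
  shows "recursive_nat (Suc k) (\<lambda>ys. F (hd ys) (tl ys))"
proof -
  obtain cf where cf: "\<forall>xs. length xs = k \<longrightarrow> eval cf xs (f xs)"
    using f unfolding recursive_nat_def by auto
  obtain cg where cg: "\<forall>xs. length xs = Suc (Suc k) \<longrightarrow> eval cg xs (g xs)"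
    using g unfolding recursive_nat_def by auto
  have Prec: "eval (Prec cf cg) (n # xs) (F n xs)" if "length xs = k" for n xs
    by (induction n) (use that cf cg in \<open>auto simp: F intro: eval_Prec0 eval_PrecS\<close>)
  show ?thesis
    unfolding recursive_nat_def
  proof (intro exI allI impI)
    fix ys :: "nat list"
    assume "length ys = Suc k"
    then obtain n xs where "ys = n # xs" "length xs = k"
      by (cases ys) auto
    then show "eval (Prec cf cg) ys (F (hd ys) (tl ys))"
      using Prec by simp
  qed
qed

lemma recursive_nat_prim_rec2:
  assumes "recursive_nat 1 f" "recursive_nat 3 g"
    and "\<And>xs. F 0 xs = f xs" "\<And>n xs. F (Suc n) xs = g (n # F n xs # xs)"
  shows "recursive_nat 2 (\<lambda>ys. F (ys ! 0) [ys ! 1])"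
proof -
  have "recursive_nat (Suc 1) (\<lambda>ys. F (hd ys) (tl ys))"
    by (rule recursive_nat_prim_rec) (use assms in \<open>simp_all add: numeral_3_eq_3\<close>)
  then show ?thesis
    unfolding numeral_2_eq_2 One_nat_def
    by (rule recursive_nat_cong) (auto simp: length_Suc_conv)
qed

lemma recursive_nat_prim_rec1:
  assumes "recursive_nat 0 f" "recursive_nat 2 g"
    and "\<And>xs. F 0 xs = f xs" "\<And>n xs. F (Suc n) xs = g (n # F n xs # xs)"
  shows "recursive_nat 1 (\<lambda>ys. F (ys ! 0) [])"
proof -
  have "recursive_nat (Suc 0) (\<lambda>ys. F (hd ys) (tl ys))"
    by (rule recursive_nat_prim_rec) (use assms in \<open>simp_all add: numeral_2_eq_2\<close>)
  then show ?thesis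
    unfolding One_nat_def by (rule recursive_nat_cong) (auto simp: length_Suc_conv)
qed

lemma recursive_plus: "recursive_nat 2 (\<lambda>ys. ys ! 0 + ys ! 1)"
  using recursive_nat_prim_rec2[of "\<lambda>xs. xs ! 0" "\<lambda>zs. Suc (zs ! 1)" "\<lambda>n xs. n + xs ! 0"]
  by (simp add: recursive_nat_proj recursive_nat_Suc)

lemma recursive_nat_add [recursive_intros]:
  "recursive_nat k f \<Longrightarrow> recursive_nat k g \<Longrightarrow> recursive_nat k (\<lambda>xs. f xs + g xs)"
  by (rule recursive_nat_comp2[OF recursive_plus])

lemma recursive_times: "recursive_nat 2 (\<lambda>ys. ys ! 0 * ys ! 1)"
  using recursive_nat_prim_rec2[of "\<lambda>_. 0" "\<lambda>zs. zs ! 1 + zs ! 2" "\<lambda>n xs. n * xs ! 0"]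
  by (simp add: recursive_nat_const recursive_nat_add recursive_nat_proj)

lemma recursive_nat_mult [recursive_intros]:
  "recursive_nat k f \<Longrightarrow> recursive_nat k g \<Longrightarrow> recursive_nat k (\<lambda>xs. f xs * g xs)"
  by (rule recursive_nat_comp2[OF recursive_times])

lemma recursive_decr: "recursive_nat 1 (\<lambda>ys. ys ! 0 - 1)"
  using recursive_nat_prim_rec1[of "\<lambda>_. 0" "\<lambda>zs. zs ! 0" "\<lambda>n _. n - 1"]
  by (simp add: recursive_nat_const recursive_nat_proj)

lemma recursive_monus: "recursive_nat 2 (\<lambda>ys. ys ! 1 - ys ! 0)"
proof -
  have "recursive_nat 3 (\<lambda>zs. zs ! 1 - 1)"
    by (rule recursive_nat_comp1[OF recursive_decr recursive_nat_proj]) simp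
  then show ?thesis
    using recursive_nat_prim_rec2[of "\<lambda>xs. xs ! 0" "\<lambda>zs. zs ! 1 - 1" "\<lambda>n xs. xs ! 0 - n"]
    by (simp add: recursive_nat_proj)
qed

lemma recursive_nat_diff [recursive_intros]:
  "recursive_nat k f \<Longrightarrow> recursive_nat k g \<Longrightarrow> recursive_nat k (\<lambda>xs. f xs - g xs)"
  by (rule recursive_nat_comp2[where F = "\<lambda>a b. b - a", OF recursive_monus])

lemma recursive_exp2: "recursive_nat 1 (\<lambda>ys. 2 ^ (ys ! 0))"
  using recursive_nat_prim_rec1[of "\<lambda>_. 1" "\<lambda>zs. 2 * zs ! 1" "\<lambda>n _. 2 ^ n"]
  by (simp add: recursive_nat_const recursive_nat_mult recursive_nat_proj)

lemma recursive_nat_exp2 [recursive_intros]: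
  "recursive_nat k f \<Longrightarrow> recursive_nat k (\<lambda>xs. 2 ^ f xs)"
  by (rule recursive_nat_comp1[OF recursive_exp2])

lemma recursive_nat_funpow:
  assumes F: "recursive_nat 1 (\<lambda>ys. F (ys ! 0))" and n: "recursive_nat k n" and f: "recursive_nat k f"
  shows "recursive_nat k (\<lambda>xs. (F ^^ n xs) (f xs))"
proof -
  have "recursive_nat 3 (\<lambda>zs. F (zs ! 1))"
    by (rule recursive_nat_comp1[OF F recursive_nat_proj]) simp
  then have "recursive_nat 2 (\<lambda>ys. (F ^^ (ys ! 0)) (ys ! 1))"
    using recursive_nat_prim_rec2[of "\<lambda>xs. xs ! 0" "\<lambda>zs. F (zs ! 1)" "\<lambda>n xs. (F ^^ n) (xs ! 0)"]
    by (simp add: recursive_nat_proj)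
  then show ?thesis
    by (rule recursive_nat_comp2[OF _ n f])
qed

lemma recursive_nat_bound_var_first:
  assumes F: "recursive_nat (Suc k) (\<lambda>ys. F (ys ! k) (take k ys))"
  shows "recursive_nat (Suc (Suc k)) (\<lambda>zs. F (zs ! 0) (drop 2 zs))"
proof -
  let ?is = "map (\<lambda>i. i + 2) [0..<k] @ [0]"
  have "recursive_nat (Suc (Suc k)) (\<lambda>zs. (\<lambda>ys. F (ys ! k) (take k ys)) (map (\<lambda>i. zs ! i) ?is))"
    by (rule recursive_nat_reindex[OF F]) auto
  then show ?thesis
  proof (rule recursive_nat_cong)
    fix zs :: "nat list"
    assume l: "length zs = Suc (Suc k)"
    have "map (\<lambda>i. zs ! i) (map (\<lambda>i. i + 2) [0..<k]) = drop 2 zs"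
      using l by (intro nth_equalityI) auto
    then have "map (\<lambda>i. zs ! i) ?is = drop 2 zs @ [zs ! 0]"
      by simp
    then show "(\<lambda>ys. F (ys ! k) (take k ys)) (map (\<lambda>i. zs ! i) ?is) = F (zs ! 0) (drop 2 zs)"
      using l by (simp add: nth_append)
  qed
qed

lemma recursive_nat_sum [recursive_intros]:
  assumes F: "recursive_nat (Suc k) (\<lambda>ys. F (ys ! k) (take k ys))" and N: "recursive_nat k N"
  shows "recursive_nat k (\<lambda>xs. \<Sum>j<N xs. F j xs)"
proof -
  have "recursive_nat (Suc (Suc k)) (\<lambda>zs. zs ! 1 + F (zs ! 0) (drop 2 zs))"
    by (rule recursive_nat_add[OF recursive_nat_proj recursive_nat_bound_var_first[OF F]]) simp
  then have "recursive_nat (Suc k) (\<lambda>ys. \<Sum>j<hd ys. F j (tl ys))"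
    by (rule recursive_nat_prim_rec[OF recursive_nat_const]) simp_all
  from recursive_nat_Cons[OF this N] show ?thesis
    by simp
qed

lemma recursive_nat_prod [recursive_intros]:
  assumes F: "recursive_nat (Suc k) (\<lambda>ys. F (ys ! k) (take k ys))" and N: "recursive_nat k N"
  shows "recursive_nat k (\<lambda>xs. \<Prod>j<N xs. F j xs)"
proof -
  have "recursive_nat (Suc (Suc k)) (\<lambda>zs. zs ! 1 * F (zs ! 0) (drop 2 zs))"
    by (rule recursive_nat_mult[OF recursive_nat_proj recursive_nat_bound_var_first[OF F]]) simp
  then have "recursive_nat (Suc k) (\<lambda>ys. \<Prod>j<hd ys. F j (tl ys))"
    by (rule recursive_nat_prim_rec[OF recursive_nat_const]) (simp_all add: mult.commute)
  from recursive_nat_Cons[OF this N] show ?thesis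
    by simp
qed

lemma recursive_predD: "recursive_pred k P \<Longrightarrow> recursive_nat k (\<lambda>xs. if P xs then 1 else 0)"
  unfolding recursive_pred_def .

lemma recursive_pred_pos:
  assumes "recursive_nat k f" "\<And>xs. length xs = k \<Longrightarrow> P xs \<longleftrightarrow> 0 < f xs"
  shows "recursive_pred k P"
proof -
  have "recursive_nat k (\<lambda>xs. 1 - (1 - f xs))"
    by (intro recursive_nat_diff recursive_nat_const assms)
  then show ?thesis
    unfolding recursive_pred_def by (rule recursive_nat_cong) (use assms(2) in auto)
qed

lemma recursive_pred_le [recursive_intros]:
  assumes "recursive_nat k f" "recursive_nat k g"
  shows "recursive_pred k (\<lambda>xs. f xs \<le> g xs)"
proof -
  have "recursive_nat k (\<lambda>xs. 1 - (f xs - g xs))"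
    by (intro recursive_intros assms)
  then show ?thesis
    unfolding recursive_pred_def by (rule recursive_nat_cong) auto
qed

lemma recursive_pred_less [recursive_intros]:
  "recursive_nat k f \<Longrightarrow> recursive_nat k g \<Longrightarrow> recursive_pred k (\<lambda>xs. f xs < g xs)"
  by (rule recursive_pred_pos[OF recursive_nat_diff]) auto

lemma recursive_pred_eq [recursive_intros]:
  assumes "recursive_nat k f" "recursive_nat k g"
  shows "recursive_pred k (\<lambda>xs. f xs = g xs)"
proof -
  have "recursive_nat k (\<lambda>xs. 1 - ((f xs - g xs) + (g xs - f xs)))"
    by (intro recursive_intros assms)
  then show ?thesis
    unfolding recursive_pred_def by (rule recursive_nat_cong) auto
qed

lemma recursive_pred_conj [recursive_intros]:
  assumes "recursive_pred k P" "recursive_pred k Q"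
  shows "recursive_pred k (\<lambda>xs. P xs \<and> Q xs)"
proof -
  have "recursive_nat k (\<lambda>xs. (if P xs then 1 else 0) * (if Q xs then 1 else 0))"
    by (intro recursive_nat_mult recursive_predD assms)
  then show ?thesis
    unfolding recursive_pred_def by (rule recursive_nat_cong) auto
qed

lemma recursive_pred_not [recursive_intros]:
  assumes "recursive_pred k P"
  shows "recursive_pred k (\<lambda>xs. \<not> P xs)"
proof -
  have "recursive_nat k (\<lambda>xs. 1 - (if P xs then 1 else 0))"
    by (intro recursive_nat_diff recursive_nat_const recursive_predD assms)
  then show ?thesis
    unfolding recursive_pred_def by (rule recursive_nat_cong) auto
qed

lemma recursive_pred_disj [recursive_intros]:
  assumes "recursive_pred k P" "recursive_pred k Q"
  shows "recursive_pred k (\<lambda>xs. P xs \<or> Q xs)"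
proof -
  have "recursive_nat k (\<lambda>xs. (if P xs then 1 else 0) + (if Q xs then 1 else 0))"
    by (intro recursive_nat_add recursive_predD assms)
  then show ?thesis
    by (rule recursive_pred_pos) auto
qed

lemma recursive_nat_if [recursive_intros]:
  assumes "recursive_pred k P" "recursive_nat k f" "recursive_nat k g"
  shows "recursive_nat k (\<lambda>xs. if P xs then f xs else g xs)"
proof -
  have "recursive_nat k (\<lambda>xs. (if P xs then 1 else 0) * f xs + (1 - (if P xs then 1 else 0)) * g xs)"
    by (intro recursive_intros recursive_predD assms)
  then show ?thesis
    by (rule recursive_nat_cong) auto
qed

lemma recursive_pred_bex [recursive_intros]:
  assumes "recursive_pred (Suc k) (\<lambda>ys. P (ys ! k) (take k ys))" "recursive_nat k N"
  shows "recursive_pred k (\<lambda>xs. \<exists>j<N xs. P j xs)"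
proof (rule recursive_pred_pos[OF recursive_nat_sum[OF recursive_predD[OF assms(1)] assms(2)]])
  fix xs :: "nat list"
  have "(\<Sum>j<N xs. if P j xs then 1 else 0) = (0::nat) \<longleftrightarrow> \<not> (\<exists>j<N xs. P j xs)"
    by (auto simp: sum_eq_0_iff)
  then show "(\<exists>j<N xs. P j xs) \<longleftrightarrow> 0 < (\<Sum>j<N xs. if P j xs then 1 else (0::nat))"
    by (metis bot_nat_0.not_eq_extremum)
qed

lemma recursive_pred_ball [recursive_intros]:
  assumes "recursive_pred (Suc k) (\<lambda>ys. P (ys ! k) (take k ys))" "recursive_nat k N"
  shows "recursive_pred k (\<lambda>xs. \<forall>j<N xs. P j xs)"
  using recursive_pred_not[OF recursive_pred_bex[OF recursive_pred_not[OF assms(1)] assms(2)]]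
  by simp

definition bounded_least :: "nat \<Rightarrow> (nat \<Rightarrow> bool) \<Rightarrow> nat" where
  "bounded_least n P = (if \<exists>j<n. P j then LEAST j. P j else n)"

lemma bounded_least_spec:
  assumes "\<exists>j<n. P j"
  shows "P (bounded_least n P)" "bounded_least n P < n" "\<And>j. j < bounded_least n P \<Longrightarrow> \<not> P j"
proof -
  have eq: "bounded_least n P = (LEAST j. P j)"
    using assms by (simp add: bounded_least_def)
  from assms obtain j where "j < n" "P j"
    by auto
  then show "P (bounded_least n P)" "bounded_least n P < n"
    unfolding eq by (auto intro: LeastI dest: Least_le)
  show "\<And>j. j < bounded_least n P \<Longrightarrow> \<not> P j"
    unfolding eq using not_less_Least by blast
qed

lemma bounded_least_none: "\<not> (\<exists>j<n. P j) \<Longrightarrow> bounded_least n P = n"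
  unfolding bounded_least_def by auto

lemma bounded_least_eq_Least: "\<exists>j<n. P j \<Longrightarrow> bounded_least n P = (LEAST j. P j)"
  by (simp add: bounded_least_def)

lemma bounded_least_cong:
  assumes "\<And>j. j < n \<Longrightarrow> P j = Q j"
  shows "bounded_least n P = bounded_least n Q"
proof (cases "\<exists>j<n. P j")
  case True
  then have "\<exists>j<n. Q j"
    using assms by blast
  with True have "bounded_least n P = (LEAST j. P j)" "bounded_least n Q = (LEAST j. Q j)"
    by (simp_all add: bounded_least_eq_Least)
  then show ?thesis
    using bounded_least_spec[OF True] bounded_least_spec[OF \<open>\<exists>j<n. Q j\<close>] assms
    by (metis linorder_neqE_nat order.strict_trans)
next
  case False
  then show ?thesis
    using assms by (simp add: bounded_least_none)
qed

lemma bounded_least_eq_sum: "bounded_least n P = (\<Sum>k<n. if \<forall>j<Suc k. \<not> P j then 1 else 0)"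
proof (induction n)
  case 0
  then show ?case
    by (simp add: bounded_least_def)
next
  case (Suc n)
  consider "\<exists>j<n. P j" | "\<not> (\<exists>j<n. P j)" "P n" | "\<not> (\<exists>j<Suc n. P j)"
    using less_Suc_eq by blast
  then show ?case
  proof cases
    case 1
    then have "bounded_least (Suc n) P = bounded_least n P"
      by (auto simp: bounded_least_def)
    moreover have "\<not> (\<forall>j<Suc n. \<not> P j)"
      using 1 less_SucI by blast
    ultimately show ?thesis
      using Suc by simp
  next
    case 2
    then have "(LEAST j. P j) = n"
      by (intro Least_equality) (auto simp flip: not_less)
    then have "bounded_least (Suc n) P = n"
      using 2 by (auto simp: bounded_least_def)
    moreover have "bounded_least n P = n" "\<not> (\<forall>j<Suc n. \<not> P j)"
      using 2 by (auto simp: bounded_least_none)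
    ultimately show ?thesis
      using Suc by simp
  next
    case 3
    then have "bounded_least (Suc n) P = Suc n" "bounded_least n P = n"
      by (simp_all add: bounded_least_none)
    then show ?thesis
      using Suc 3 by simp
  qed
qed

lemma recursive_nat_bounded_least [recursive_intros]:
  assumes P: "recursive_pred (Suc k) (\<lambda>ys. P (ys ! k) (take k ys))" and N: "recursive_nat k N"
  shows "recursive_nat k (\<lambda>xs. bounded_least (N xs) (\<lambda>j. P j xs))"
proof -
  let ?is = "[0..<k] @ [Suc k]"
  have "recursive_pred (Suc (Suc k))
      (\<lambda>zs. (\<lambda>ys. \<not> P (ys ! k) (take k ys)) (map (\<lambda>i. zs ! i) ?is))"
    using recursive_nat_reindex[OF recursive_predD[OF recursive_pred_not[OF P]], of ?is]
    unfolding recursive_pred_def by auto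
  then have "recursive_pred (Suc (Suc k)) (\<lambda>zs. \<not> P (zs ! Suc k) (take k (take (Suc k) zs)))"
  proof (rule recursive_pred_cong)
    fix zs :: "nat list"
    assume l: "length zs = Suc (Suc k)"
    then have "map (\<lambda>i. zs ! i) [0..<k] = take k zs"
      by (intro nth_equalityI) auto
    then show "(\<lambda>ys. \<not> P (ys ! k) (take k ys)) (map (\<lambda>i. zs ! i) ?is) =
      (\<not> P (zs ! Suc k) (take k (take (Suc k) zs)))"
      using l by (simp add: nth_append min_def)
  qed
  then have "recursive_pred (Suc k) (\<lambda>ys. \<forall>j<Suc (ys ! k). \<not> P j (take k ys))"
    by (rule recursive_pred_ball[OF _ recursive_nat_Suc[OF recursive_nat_proj]]) simp
  then have "recursive_nat k (\<lambda>xs. \<Sum>i<N xs. if \<forall>j<Suc i. \<not> P j xs then 1 else 0)"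
    using N by (rule recursive_nat_sum[OF recursive_predD])
  then show ?thesis
    by (simp only: bounded_least_eq_sum)
qed

lemma recursive_pred_comp1:
  "recursive_pred 1 (\<lambda>ys. P (ys ! 0)) \<Longrightarrow> recursive_nat k f \<Longrightarrow> recursive_pred k (\<lambda>xs. P (f xs))"
  unfolding recursive_pred_def by (rule recursive_nat_comp1[where F = "\<lambda>a. if P a then 1 else 0"])

lemma recursive_pred_comp2:
  "recursive_pred 2 (\<lambda>ys. P (ys ! 0) (ys ! 1)) \<Longrightarrow> recursive_nat k f \<Longrightarrow> recursive_nat k g \<Longrightarrow>
    recursive_pred k (\<lambda>xs. P (f xs) (g xs))"
  unfolding recursive_pred_def by (rule recursive_nat_comp2[where F = "\<lambda>a b. if P a b then 1 else 0"])

lemma recursive_pred_comp3: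
  "recursive_pred 3 (\<lambda>ys. P (ys ! 0) (ys ! 1) (ys ! 2)) \<Longrightarrow>
    recursive_nat k f \<Longrightarrow> recursive_nat k g \<Longrightarrow> recursive_nat k h \<Longrightarrow>
    recursive_pred k (\<lambda>xs. P (f xs) (g xs) (h xs))"
  unfolding recursive_pred_def
  by (rule recursive_nat_comp3[where F = "\<lambda>a b c. if P a b c then 1 else 0"])

lemma recursive_pred_comp4:
  "recursive_pred 4 (\<lambda>ys. P (ys ! 0) (ys ! 1) (ys ! 2) (ys ! 3)) \<Longrightarrow>
    recursive_nat k f \<Longrightarrow> recursive_nat k g \<Longrightarrow> recursive_nat k h \<Longrightarrow> recursive_nat k l \<Longrightarrow>
    recursive_pred k (\<lambda>xs. P (f xs) (g xs) (h xs) (l xs))"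
  unfolding recursive_pred_def
  by (rule recursive_nat_comp4[where F = "\<lambda>a b c d. if P a b c d then 1 else 0"])

text \<open>Recursiveness of a concrete function is proved by decomposing it with recursive_intros;
  the side conditions on argument positions that this leaves, such as take 3 ys ! 1 = ys ! 1
  or 1 < 3, are solved by index_simps.\<close>

lemmas index_simps = nth_take zero_less_numeral zero_less_one one_less_numeral_iff numeral_less_iff
  less_num_simps le_num_simps numeral_le_iff Suc_numeral add_num_simps zero_less_Suc less_Suc0
  numeral_One

lemma triangle_eq_sum: "triangle n = (\<Sum>j<Suc n. j)"
  by (induction n) auto

lemma recursive_nat_triangle: "recursive_nat k f \<Longrightarrow> recursive_nat k (\<lambda>xs. triangle (f xs))"
proof (erule recursive_nat_comp1[rotated])
  show "recursive_nat 1 (\<lambda>xs. triangle (xs ! 0))"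
    unfolding triangle_eq_sum by (intro recursive_intros | simp_all only: index_simps)+
qed

lemma recursive_nat_prod_encode [recursive_intros]:
  "recursive_nat k f \<Longrightarrow> recursive_nat k g \<Longrightarrow> recursive_nat k (\<lambda>xs. prod_encode (f xs, g xs))"
  unfolding prod_encode_def by (simp, intro recursive_nat_add recursive_nat_triangle)

definition pair_fst :: "nat \<Rightarrow> nat" where "pair_fst c = fst (prod_decode c)"
definition pair_snd :: "nat \<Rightarrow> nat" where "pair_snd c = snd (prod_decode c)"

lemma pair_fst_encode [simp]: "pair_fst (prod_encode (a, b)) = a"
  by (simp add: pair_fst_def)

lemma pair_snd_encode [simp]: "pair_snd (prod_encode (a, b)) = b"
  by (simp add: pair_snd_def)

lemma prod_encode_pair_fst_snd [simp]: "prod_encode (pair_fst c, pair_snd c) = c"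
  by (simp add: pair_fst_def pair_snd_def)

lemma pair_fst_eq_bounded_least:
  "pair_fst c = bounded_least (Suc c) (\<lambda>a. \<exists>b<Suc c. prod_encode (a, b) = c)"
    (is "_ = ?a")
proof -
  have "\<exists>a<Suc c. \<exists>b<Suc c. prod_encode (a, b) = c"
    using le_prod_encode_1[of "pair_fst c" "pair_snd c"]
      le_prod_encode_2[of "pair_snd c" "pair_fst c"]
    by (intro exI[of _ "pair_fst c"] conjI exI[of _ "pair_snd c"]) auto
  from bounded_least_spec(1)[OF this] obtain b where "prod_encode (?a, b) = c"
    by blast
  then have "pair_fst c = pair_fst (prod_encode (?a, b))"
    by simp
  then show ?thesis
    by simp
qed

lemma pair_snd_eq_bounded_least:
  "pair_snd c = bounded_least (Suc c) (\<lambda>b. \<exists>a<Suc c. prod_encode (a, b) = c)"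
    (is "_ = ?b")
proof -
  have "\<exists>b<Suc c. \<exists>a<Suc c. prod_encode (a, b) = c"
    using le_prod_encode_1[of "pair_fst c" "pair_snd c"]
      le_prod_encode_2[of "pair_snd c" "pair_fst c"]
    by (intro exI[of _ "pair_snd c"] conjI exI[of _ "pair_fst c"]) auto
  from bounded_least_spec(1)[OF this] obtain a where "prod_encode (a, ?b) = c"
    by blast
  then have "pair_snd c = pair_snd (prod_encode (a, ?b))"
    by simp
  then show ?thesis
    by simp
qed

lemma recursive_nat_pair_fst [recursive_intros]:
  "recursive_nat k f \<Longrightarrow> recursive_nat k (\<lambda>xs. pair_fst (f xs))"
proof (erule recursive_nat_comp1[rotated])
  show "recursive_nat 1 (\<lambda>xs. pair_fst (xs ! 0))"
    unfolding pair_fst_eq_bounded_least by (intro recursive_intros | simp_all only: index_simps)+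
qed

lemma recursive_nat_pair_snd [recursive_intros]:
  "recursive_nat k f \<Longrightarrow> recursive_nat k (\<lambda>xs. pair_snd (f xs))"
proof (erule recursive_nat_comp1[rotated])
  show "recursive_nat 1 (\<lambda>xs. pair_snd (xs ! 0))"
    unfolding pair_snd_eq_bounded_least by (intro recursive_intros | simp_all only: index_simps)+
qed

definition steps_to_zero :: "(nat \<Rightarrow> nat) \<Rightarrow> nat \<Rightarrow> nat" where
  "steps_to_zero t c = bounded_least (Suc c) (\<lambda>j. (t ^^ j) c = 0)"

lemma funpow_tail_code:
  assumes "t (code []) = code []" "\<And>x xs. t (code (x # xs)) = code xs"
  shows "(t ^^ j) (code xs) = code (drop j xs)"
proof (induction j arbitrary: xs)
  case 0
  then show ?case
    by simp
next
  case (Suc j)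
  then show ?case
    by (cases xs) (simp_all add: funpow_Suc_right assms del: funpow.simps)
qed

lemma steps_to_zero_code:
  assumes "\<And>j xs. (t ^^ j) (code xs) = code (drop j xs)"
    and "\<And>xs. code xs = 0 \<longleftrightarrow> xs = []" and "length xs \<le> code xs"
  shows "steps_to_zero t (code xs) = length xs"
proof -
  have "\<exists>j<Suc (code xs). (t ^^ j) (code xs) = 0"
    using assms by (intro exI[of _ "length xs"]) auto
  then have "steps_to_zero t (code xs) = (LEAST j. (t ^^ j) (code xs) = 0)"
    unfolding steps_to_zero_def by (rule bounded_least_eq_Least)
  also have "\<dots> = length xs"
    using assms(1,2) by (intro Least_equality) auto
  finally show ?thesis .
qed

lemma recursive_nat_steps_to_zero:
  assumes "recursive_nat 1 (\<lambda>xs. t (xs ! 0))"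
  shows "recursive_nat k f \<Longrightarrow> recursive_nat k (\<lambda>xs. steps_to_zero t (f xs))"
proof (erule recursive_nat_comp1[rotated])
  show "recursive_nat 1 (\<lambda>xs. steps_to_zero t (xs ! 0))"
    unfolding steps_to_zero_def
    by (intro recursive_intros recursive_nat_funpow[OF assms] | simp_all only: index_simps)+
qed

definition code_tl :: "nat \<Rightarrow> nat" where "code_tl c = pair_snd (c - 1)"
definition code_hd :: "nat \<Rightarrow> nat" where "code_hd c = pair_fst (c - 1)"
definition code_nth :: "nat \<Rightarrow> nat \<Rightarrow> nat" where "code_nth j c = code_hd ((code_tl ^^ j) c)"
definition code_length :: "nat \<Rightarrow> nat" where "code_length = steps_to_zero code_tl"

lemma code_tl_cons [simp]: "code_tl (Suc (prod_encode (x, l))) = l"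
  by (simp add: code_tl_def)

lemma code_hd_cons [simp]: "code_hd (Suc (prod_encode (x, l))) = x"
  by (simp add: code_hd_def)

lemma code_tl_0: "code_tl 0 = 0"
  by (simp add: code_tl_def pair_snd_def prod_decode_def prod_decode_aux.simps)

lemma code_tl_funpow: "(code_tl ^^ j) (list_encode xs) = list_encode (drop j xs)"
  by (rule funpow_tail_code) (simp_all add: code_tl_0)

lemma code_nth_list_encode [simp]: "j < length xs \<Longrightarrow> code_nth j (list_encode xs) = xs ! j"
  unfolding code_nth_def code_tl_funpow by (simp add: Cons_nth_drop_Suc[symmetric])

lemma length_le_list_encode: "length xs \<le> list_encode xs"
proof (induction xs)
  case (Cons x xs)
  then show ?case
    using le_prod_encode_2[of "list_encode xs" x] by simp
qed simp

lemma list_encode_eq_0_iff: "list_encode xs = 0 \<longleftrightarrow> xs = []"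
  by (cases xs) auto

lemma code_length_list_encode [simp]: "code_length (list_encode xs) = length xs"
  unfolding code_length_def
  by (rule steps_to_zero_code[OF code_tl_funpow list_encode_eq_0_iff length_le_list_encode])

lemma code_length_0 [simp]: "code_length 0 = 0"
  using code_length_list_encode[of "[]"] by simp

lemma code_length_eq: "code_length c = length (list_decode c)"
  using code_length_list_encode[of "list_decode c"] by simp

lemma code_nth_eq: "j < length (list_decode c) \<Longrightarrow> code_nth j c = list_decode c ! j"
  using code_nth_list_encode[of j "list_decode c"] by simp

lemma code_nth_cons_0 [simp]: "code_nth 0 (Suc (prod_encode (x, l))) = x"
  by (simp add: code_nth_def)

lemma code_nth_cons_Suc [simp]: "code_nth (Suc j) (Suc (prod_encode (x, l))) = code_nth j l"
  by (simp add: code_nth_def funpow_Suc_right del: funpow.simps)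

lemma code_length_cons [simp]: "code_length (Suc (prod_encode (x, l))) = Suc (code_length l)"
  by (simp add: code_length_eq)

lemma recursive_nat_code_hd [recursive_intros]:
  "recursive_nat k f \<Longrightarrow> recursive_nat k (\<lambda>xs. code_hd (f xs))"
  unfolding code_hd_def by (intro recursive_intros)

lemma recursive_nat_code_tl [recursive_intros]:
  "recursive_nat k f \<Longrightarrow> recursive_nat k (\<lambda>xs. code_tl (f xs))"
  unfolding code_tl_def by (intro recursive_intros)

lemma recursive_nat_code_nth [recursive_intros]:
  "recursive_nat k n \<Longrightarrow> recursive_nat k f \<Longrightarrow> recursive_nat k (\<lambda>xs. code_nth (n xs) (f xs))"
  unfolding code_nth_def
  by (intro recursive_nat_code_hd
      recursive_nat_funpow[OF recursive_nat_code_tl[OF recursive_nat_proj]]) simp_all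

lemma recursive_nat_code_length [recursive_intros]:
  "recursive_nat k f \<Longrightarrow> recursive_nat k (\<lambda>xs. code_length (f xs))"
  unfolding code_length_def
  by (rule recursive_nat_steps_to_zero[OF recursive_nat_code_tl[OF recursive_nat_proj]]) simp_all

text \<open>The code of a nonempty string is odd or even according as its first symbol is
  0 or 1, so the string operations only need halving and parity.\<close>

definition str_tl :: "nat \<Rightarrow> nat" where "str_tl c = (c - 1) div 2"
definition str_len :: "nat \<Rightarrow> nat" where "str_len = steps_to_zero str_tl"
definition str_take :: "nat \<Rightarrow> nat \<Rightarrow> nat" where "str_take k c = c - 2 ^ k * (str_tl ^^ k) c"
definition str_bit :: "nat \<Rightarrow> nat \<Rightarrow> nat" where
  "str_bit k c = (if even ((str_tl ^^ k) c) then 1 else 0)"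

lemma str_tl_funpow: "(str_tl ^^ j) (str_code s) = str_code (drop j s)"
  by (rule funpow_tail_code) (simp_all add: str_tl_def)

lemma length_le_str_code: "length s \<le> str_code s"
  by (induction s) auto

lemma str_code_eq_0_iff: "str_code s = 0 \<longleftrightarrow> s = []"
  by (cases s) auto

lemma str_len_str_code [simp]: "str_len (str_code s) = length s"
  unfolding str_len_def
  by (rule steps_to_zero_code[OF str_tl_funpow str_code_eq_0_iff length_le_str_code])

lemma str_code_take_drop: "str_code s = str_code (take k s) + 2 ^ k * str_code (drop k s)"
proof (induction s arbitrary: k)
  case Nil
  then show ?case
    by simp
next
  case (Cons x s)
  show ?case
    using Cons.IH[of "k - 1"] by (cases k) (simp_all add: algebra_simps)
qed

lemma str_take_str_code [simp]: "str_take k (str_code s) = str_code (take k s)"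
  unfolding str_take_def str_tl_funpow using str_code_take_drop[of s k] by simp

lemma str_bit_str_code [simp]: "k < length s \<Longrightarrow> str_bit k (str_code s) = of_bool (s ! k)"
  unfolding str_bit_def str_tl_funpow by (simp add: Cons_nth_drop_Suc[symmetric])

lemma div2_eq_bounded_least: "c div 2 = bounded_least (Suc c) (\<lambda>q. c < 2 * q + 2)"
proof -
  have ex: "\<exists>q<Suc c. c < 2 * q + 2"
    by (intro exI[of _ "c div 2"]) auto
  show ?thesis
    using bounded_least_spec[OF ex] bounded_least_spec(3)[OF ex, of "c div 2"] by linarith
qed

lemma recursive_nat_div2 [recursive_intros]:
  "recursive_nat k f \<Longrightarrow> recursive_nat k (\<lambda>xs. f xs div 2)"
proof (erule recursive_nat_comp1[rotated])
  show "recursive_nat 1 (\<lambda>xs. xs ! 0 div 2)"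
    unfolding div2_eq_bounded_least by (intro recursive_intros | simp_all only: index_simps)+
qed

lemma recursive_pred_even [recursive_intros]:
  assumes "recursive_nat k f"
  shows "recursive_pred k (\<lambda>xs. even (f xs))"
proof -
  have "recursive_pred k (\<lambda>xs. 2 * (f xs div 2) = f xs)"
    by (intro recursive_intros assms)
  then show ?thesis
    by (rule recursive_pred_cong) (simp add: dvd_mult_div_cancel[symmetric] dvd_def,
        metis dvd_def dvd_mult_div_cancel)
qed

lemma recursive_nat_str_tl [recursive_intros]:
  "recursive_nat k f \<Longrightarrow> recursive_nat k (\<lambda>xs. str_tl (f xs))"
  unfolding str_tl_def by (intro recursive_intros)

lemma recursive_nat_str_tl_funpow:
  "recursive_nat k n \<Longrightarrow> recursive_nat k f \<Longrightarrow> recursive_nat k (\<lambda>xs. (str_tl ^^ n xs) (f xs))"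
  by (rule recursive_nat_funpow[OF recursive_nat_str_tl[OF recursive_nat_proj]]) simp_all

lemma recursive_nat_str_len [recursive_intros]:
  "recursive_nat k f \<Longrightarrow> recursive_nat k (\<lambda>xs. str_len (f xs))"
  unfolding str_len_def
  by (rule recursive_nat_steps_to_zero[OF recursive_nat_str_tl[OF recursive_nat_proj]]) simp_all

lemma recursive_nat_str_take [recursive_intros]:
  "recursive_nat k n \<Longrightarrow> recursive_nat k f \<Longrightarrow> recursive_nat k (\<lambda>xs. str_take (n xs) (f xs))"
  unfolding str_take_def by (intro recursive_intros recursive_nat_str_tl_funpow)

lemma recursive_nat_str_bit [recursive_intros]:
  "recursive_nat k n \<Longrightarrow> recursive_nat k f \<Longrightarrow> recursive_nat k (\<lambda>xs. str_bit (n xs) (f xs))"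
  unfolding str_bit_def by (intro recursive_intros recursive_nat_str_tl_funpow)

section \<open>Certified evaluation\<close>

text \<open>A trace is a list of claims (code of a program, code of an argument list, value), each of
  which follows by one rule of eval from claims occurring earlier in the trace.
  Checking a coded trace is primitive recursive, and a claim lies on some trace iff it is true;
  this is Kleene's normal form theorem in the form needed here.\<close>

definition code_cons :: "nat \<Rightarrow> nat \<Rightarrow> nat" where "code_cons a l = Suc (prod_encode (a, l))"

lemma code_cons_list_encode [simp]: "code_cons a (list_encode xs) = list_encode (a # xs)"
  by (simp add: code_cons_def)

lemma recursive_nat_code_cons [recursive_intros]:
  "recursive_nat k f \<Longrightarrow> recursive_nat k g \<Longrightarrow> recursive_nat k (\<lambda>xs. code_cons (f xs) (g xs))"
  unfolding code_cons_def by (intro recursive_intros)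

fun recf_code :: "recf \<Rightarrow> nat" where
  "recf_code Zero = prod_encode (0, 0)"
| "recf_code Succ = prod_encode (1, 0)"
| "recf_code (Proj i) = prod_encode (2, i)"
| "recf_code (Comp f gs) = prod_encode (3, prod_encode (recf_code f, list_encode (map recf_code gs)))"
| "recf_code (Prec f g) = prod_encode (4, prod_encode (recf_code f, recf_code g))"
| "recf_code (Mini f) = prod_encode (5, recf_code f)"

definition triple :: "nat \<Rightarrow> nat \<Rightarrow> nat \<Rightarrow> nat" where
  "triple c x y = prod_encode (c, prod_encode (x, y))"

lemma triple_sel [simp]:
  "pair_fst (triple c x y) = c" "pair_fst (pair_snd (triple c x y)) = x"
  "pair_snd (pair_snd (triple c x y)) = y"
  by (simp_all add: triple_def)

lemma triple_eta: "triple (pair_fst e) (pair_fst (pair_snd e)) (pair_snd (pair_snd e)) = e"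
  by (simp add: triple_def)

lemma recursive_nat_triple [recursive_intros]:
  "recursive_nat k f \<Longrightarrow> recursive_nat k g \<Longrightarrow> recursive_nat k h \<Longrightarrow>
    recursive_nat k (\<lambda>xs. triple (f xs) (g xs) (h xs))"
  unfolding triple_def by (intro recursive_intros)

text \<open>Earlier P means that some earlier claim satisfies P; keeping this quantifier abstract lets one
  definition serve both for coded traces and for sets of claims.\<close>

definition justified :: "((nat \<Rightarrow> bool) \<Rightarrow> bool) \<Rightarrow> nat \<Rightarrow> bool" where
  "justified Earlier e =
    (let c = pair_fst e; x = pair_fst (pair_snd e); y = pair_snd (pair_snd e);
         t = pair_fst c; a = pair_snd c in
      (t = 0 \<and> y = 0) \<or>
      (t = 1 \<and> 0 < code_length x \<and> y = Suc (code_nth 0 x)) \<or>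
      (t = 2 \<and> a < code_length x \<and> y = code_nth a x) \<or>
      (t = 3 \<and> Earlier (\<lambda>e'. pair_fst e' = pair_fst a \<and> pair_snd (pair_snd e') = y \<and>
          code_length (pair_fst (pair_snd e')) = code_length (pair_snd a) \<and>
          (\<forall>m<code_length (pair_snd a).
            Earlier (\<lambda>e''. e'' =
              triple (code_nth m (pair_snd a)) x (code_nth m (pair_fst (pair_snd e'))))))) \<or>
      (t = 4 \<and> 0 < code_length x \<and> code_nth 0 x = 0 \<and>
        Earlier (\<lambda>e'. e' = triple (pair_fst a) (code_tl x) y)) \<or>
      (t = 4 \<and> 0 < code_length x \<and> 0 < code_nth 0 x \<and>
        Earlier (\<lambda>e'. pair_fst e' = c \<and>
          pair_fst (pair_snd e') = code_cons (code_nth 0 x - 1) (code_tl x) \<and>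
          Earlier (\<lambda>e''. e'' = triple (pair_snd a)
            (code_cons (code_nth 0 x - 1) (code_cons (pair_snd (pair_snd e')) (code_tl x))) y))) \<or>
      (t = 5 \<and> Earlier (\<lambda>e'. e' = triple a (code_cons y x) 0) \<and>
        (\<forall>m<y. Earlier (\<lambda>e'. pair_fst e' = a \<and> pair_fst (pair_snd e') = code_cons m x \<and>
          0 < pair_snd (pair_snd e')))))"

definition justified_at :: "nat \<Rightarrow> nat \<Rightarrow> bool" where
  "justified_at L k = justified (\<lambda>P. \<exists>j<k. P (code_nth j L)) (code_nth k L)"

definition valid_trace :: "nat \<Rightarrow> bool" where
  "valid_trace L = (\<forall>k<code_length L. justified_at L k)"

definition certified :: "nat \<Rightarrow> nat \<Rightarrow> nat \<Rightarrow> nat \<Rightarrow> bool" where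
  "certified c x y t = (\<exists>L<Suc t. valid_trace L \<and> (\<exists>j<code_length L. code_nth j L = triple c x y))"

lemma recursive_justified_at: "recursive_pred 2 (\<lambda>xs. justified_at (xs ! 0) (xs ! 1))"
  unfolding justified_at_def justified_def Let_def
  by (intro recursive_intros | simp_all only: index_simps)+

lemma recursive_valid_trace: "recursive_pred 1 (\<lambda>xs. valid_trace (xs ! 0))"
  unfolding valid_trace_def
  by (intro recursive_intros recursive_pred_comp2[OF recursive_justified_at]
      | simp_all only: index_simps)+

lemma recursive_certified: "recursive_pred 4 (\<lambda>xs. certified (xs ! 0) (xs ! 1) (xs ! 2) (xs ! 3))"
  unfolding certified_def
  by (intro recursive_intros recursive_pred_comp1[OF recursive_valid_trace]
      | simp_all only: index_simps)+

lemmas recursive_pred_certified [recursive_intros] = recursive_pred_comp4[OF recursive_certified]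

definition justified_by :: "nat set \<Rightarrow> nat \<Rightarrow> bool" where
  "justified_by S e = justified (\<lambda>P. \<exists>e'\<in>S. P e') e"

definition trace_ok :: "nat list \<Rightarrow> bool" where
  "trace_ok Ls = (\<forall>k<length Ls. justified_by (set (take k Ls)) (Ls ! k))"

lemma set_take_eq_image: "k \<le> length xs \<Longrightarrow> set (take k xs) = (\<lambda>j. xs ! j) ` {..<k}"
  by (fastforce simp: in_set_conv_nth image_iff)

lemma valid_trace_list_encode: "valid_trace (list_encode Ls) = trace_ok Ls"
proof -
  have "(\<exists>j<k. P (code_nth j (list_encode Ls))) \<longleftrightarrow> (\<exists>e\<in>set (take k Ls). P e)"
    if k: "k < length Ls" for k P
  proof -
    have "code_nth j (list_encode Ls) = Ls ! j" if "j < k" for j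
      using that k by simp
    then show ?thesis
      using k by (auto simp: set_take_eq_image)
  qed
  then show ?thesis
    unfolding valid_trace_def trace_ok_def justified_at_def justified_by_def
    by (simp cong: conj_cong)
qed

lemma justified_by_mono:
  assumes "S \<subseteq> S'" "justified_by S e"
  shows "justified_by S' e"
  using assms(2) unfolding justified_by_def justified_def Let_def
  apply (elim disjE)
  subgoal by blast
  subgoal by blast
  subgoal by blast
  subgoal using assms(1) by (elim conjE bexE) (intro disjI2 disjI1 conjI bexI, auto)
  subgoal using assms(1) by (elim conjE bexE) (intro disjI2 disjI1 conjI bexI, auto)
  subgoal using assms(1) by (elim conjE bexE) (intro disjI2 disjI1 conjI bexI, auto)
  subgoal using assms(1) by (elim conjE) (intro disjI2 conjI; blast)
  done

definition sound_claims :: "nat set \<Rightarrow> bool" where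
  "sound_claims S = (\<forall>P xs y. triple (recf_code P) (list_encode xs) y \<in> S \<longrightarrow> eval P xs y)"

lemma sound_claimsD: "sound_claims S \<Longrightarrow> triple (recf_code P) (list_encode xs) y \<in> S \<Longrightarrow> eval P xs y"
  unfolding sound_claims_def by blast

lemma sound_claimsD':
  "sound_claims S \<Longrightarrow> e \<in> S \<Longrightarrow> pair_fst e = recf_code P \<Longrightarrow>
    eval P (list_decode (pair_fst (pair_snd e))) (pair_snd (pair_snd e))"
  using sound_claimsD[of S P "list_decode (pair_fst (pair_snd e))" "pair_snd (pair_snd e)"]
    triple_eta[of e]
  by simp

lemma justified_by_Comp:
  assumes "triple (recf_code f) (list_encode ys) z \<in> S" "length ys = length gs"
    "\<And>m. m < length gs \<Longrightarrow> triple (recf_code (gs ! m)) (list_encode xs) (ys ! m) \<in> S"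
  shows "justified_by S (triple (recf_code (Comp f gs)) (list_encode xs) z)"
  unfolding justified_by_def justified_def Let_def
  by (simp, rule bexI[OF _ assms(1)]) (simp add: assms(2,3))

lemma justified_by_Prec_Suc:
  assumes "triple (recf_code (Prec f g)) (list_encode (n # xs)) y \<in> S"
    "triple (recf_code g) (list_encode (n # y # xs)) z \<in> S"
  shows "justified_by S (triple (recf_code (Prec f g)) (list_encode (Suc n # xs)) z)"
  unfolding justified_by_def justified_def Let_def
  by (simp, rule bexI[OF _ assms(1)]) (use assms(2) in \<open>simp add: code_cons_def\<close>)

lemma justified_by_Mini:
  assumes "triple (recf_code f) (list_encode (n # xs)) 0 \<in> S"
    "\<And>m. m < n \<Longrightarrow> \<exists>y>0. triple (recf_code f) (list_encode (m # xs)) y \<in> S"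
  shows "justified_by S (triple (recf_code (Mini f)) (list_encode xs) n)"
proof -
  have "\<exists>e\<in>S. pair_fst e = recf_code f \<and> pair_fst (pair_snd e) = list_encode (m # xs) \<and>
      0 < pair_snd (pair_snd e)" if "m < n" for m
    using assms(2)[OF that] triple_sel by metis
  then show ?thesis
    using assms(1) unfolding justified_by_def justified_def Let_def by (simp add: code_cons_def)
qed

lemma justified_by_Comp_sound:
  assumes S: "sound_claims S"
    and ok: "justified_by S (triple (recf_code (Comp f gs)) (list_encode xs) y)"
  shows "eval (Comp f gs) xs y"
proof -
  from ok obtain e where e: "e \<in> S" "pair_fst e = recf_code f" "pair_snd (pair_snd e) = y"
    "code_length (pair_fst (pair_snd e)) = length gs"
    "\<forall>m<length gs.
      triple (recf_code (gs ! m)) (list_encode xs) (code_nth m (pair_fst (pair_snd e))) \<in> S"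
    by (auto simp: justified_by_def justified_def Let_def)
  define ys where "ys = list_decode (pair_fst (pair_snd e))"
  have len: "length ys = length gs"
    using e(4) by (simp add: ys_def code_length_eq)
  have "list_all2 (\<lambda>g y. eval g xs y) gs ys"
  proof (rule list_all2_all_nthI)
    fix m
    assume m: "m < length gs"
    then have "code_nth m (pair_fst (pair_snd e)) = ys ! m"
      using len by (simp add: ys_def code_nth_eq)
    then show "eval (gs ! m) xs (ys ! m)"
      using sound_claimsD[OF S] e(5) m by metis
  qed (use len in simp)
  moreover have "eval f ys y"
    using sound_claimsD'[OF S e(1,2)] e(3) by (simp add: ys_def)
  ultimately show ?thesis
    by (rule eval_Comp)
qed

lemma justified_by_Prec_sound:
  assumes S: "sound_claims S"
    and ok: "justified_by S (triple (recf_code (Prec f g)) (list_encode xs) y)"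
  shows "eval (Prec f g) xs y"
proof -
  obtain n xs' where xs: "xs = n # xs'"
    using ok by (cases xs) (auto simp: justified_by_def justified_def Let_def)
  show ?thesis
  proof (cases n)
    case 0
    then have "triple (recf_code f) (list_encode xs') y \<in> S"
      using ok by (auto simp: justified_by_def justified_def Let_def xs)
    then show ?thesis
      using sound_claimsD[OF S] xs 0 by (auto intro: eval_Prec0)
  next
    case (Suc n')
    from ok obtain e where e: "e \<in> S" "pair_fst e = recf_code (Prec f g)"
      "pair_fst (pair_snd e) = list_encode (n' # xs')"
      "triple (recf_code g) (list_encode (n' # pair_snd (pair_snd e) # xs')) y \<in> S"
      by (auto simp: justified_by_def justified_def Let_def code_cons_def xs Suc)
    have "eval (Prec f g) (n' # xs') (pair_snd (pair_snd e))"
      using sound_claimsD'[OF S e(1,2)] e(3) by simp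
    moreover have "eval g (n' # pair_snd (pair_snd e) # xs') y"
      using sound_claimsD[OF S e(4)] .
    ultimately show ?thesis
      using xs Suc by (auto intro: eval_PrecS)
  qed
qed

lemma justified_by_Mini_sound:
  assumes S: "sound_claims S"
    and ok: "justified_by S (triple (recf_code (Mini f)) (list_encode xs) y)"
  shows "eval (Mini f) xs y"
proof -
  from ok have zero: "triple (recf_code f) (list_encode (y # xs)) 0 \<in> S"
    and pos: "\<forall>m<y. \<exists>e\<in>S. pair_fst e = recf_code f \<and> pair_fst (pair_snd e) = list_encode (m # xs) \<and>
      0 < pair_snd (pair_snd e)"
    by (auto simp: justified_by_def justified_def Let_def)
  have "\<exists>z. eval f (m # xs) z \<and> 0 < z" if "m < y" for m
    using pos that sound_claimsD'[OF S] by fastforce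
  then show ?thesis
    using sound_claimsD[OF S zero] by (auto intro: eval_Mini)
qed

lemma justified_by_sound:
  assumes S: "sound_claims S" and ok: "justified_by S (triple (recf_code P) (list_encode xs) y)"
  shows "eval P xs y"
proof (cases P)
  case Zero
  then show ?thesis
    using ok by (simp add: justified_by_def justified_def eval_Zero)
next
  case Succ
  then have "0 < length xs" "y = Suc (code_nth 0 (list_encode xs))"
    using ok by (simp_all add: justified_by_def justified_def Let_def)
  then show ?thesis
    using Succ by (cases xs) (auto intro: eval_Succ)
next
  case (Proj i)
  then have "i < length xs" "y = code_nth i (list_encode xs)"
    using ok by (simp_all add: justified_by_def justified_def Let_def)
  then show ?thesis
    using Proj by (simp add: eval_Proj)
qed (use assms justified_by_Comp_sound justified_by_Prec_sound justified_by_Mini_sound in blast)+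

lemma trace_ok_sound: "trace_ok Ls \<Longrightarrow> triple (recf_code P) (list_encode xs) y \<in> set Ls \<Longrightarrow> eval P xs y"
proof -
  assume ok: "trace_ok Ls"
  have "sound_claims (set (take k Ls))" if "k \<le> length Ls" for k
    using that
  proof (induction k)
    case 0
    then show ?case
      by (simp add: sound_claims_def)
  next
    case (Suc k)
    then have "set (take (Suc k) Ls) = insert (Ls ! k) (set (take k Ls))"
      by (simp add: take_Suc_conv_app_nth)
    moreover have "justified_by (set (take k Ls)) (Ls ! k)"
      using ok Suc.prems by (simp add: trace_ok_def)
    ultimately show ?case
      using Suc justified_by_sound unfolding sound_claims_def by auto
  qed
  from this[of "length Ls"] show "triple (recf_code P) (list_encode xs) y \<in> set Ls \<Longrightarrow> eval P xs y"
    by (simp add: sound_claimsD)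
qed

lemma trace_ok_Nil: "trace_ok []"
  by (simp add: trace_ok_def)

lemma trace_ok_append: "trace_ok A \<Longrightarrow> trace_ok B \<Longrightarrow> trace_ok (A @ B)"
  unfolding trace_ok_def
proof (intro allI impI)
  fix k
  assume A: "\<forall>k<length A. justified_by (set (take k A)) (A ! k)"
    and B: "\<forall>k<length B. justified_by (set (take k B)) (B ! k)" and k: "k < length (A @ B)"
  show "justified_by (set (take k (A @ B))) ((A @ B) ! k)"
  proof (cases "k < length A")
    case True
    then show ?thesis
      using A by (simp add: nth_append)
  next
    case False
    then have "justified_by (set (take (k - length A) B)) (B ! (k - length A))"
      using B k by simp
    then show ?thesis
      using False by (auto simp: nth_append intro: justified_by_mono)
  qed
qed

lemma trace_ok_snoc: "trace_ok A \<Longrightarrow> justified_by (set A) e \<Longrightarrow> trace_ok (A @ [e])"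
  unfolding trace_ok_def by (auto simp: nth_append less_Suc_eq)

definition traced :: "nat \<Rightarrow> bool" where
  "traced e \<longleftrightarrow> (\<exists>L. trace_ok L \<and> e \<in> set L)"

lemma traced_justified:
  assumes "finite S" "\<forall>e\<in>S. traced e" "justified_by S e"
  shows "traced e"
proof -
  have "\<exists>L. trace_ok L \<and> S \<subseteq> set L"
    using assms(1,2)
  proof (induction rule: finite_induct)
    case empty
    then show ?case
      using trace_ok_Nil by blast
  next
    case (insert e' S)
    then obtain L1 L2 where "trace_ok L1" "S \<subseteq> set L1" "trace_ok L2" "e' \<in> set L2"
      unfolding traced_def by auto
    then show ?case
      by (intro exI[of _ "L1 @ L2"]) (auto simp: trace_ok_append)
  qed
  then obtain L where "trace_ok L" "S \<subseteq> set L"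
    by blast
  then have "trace_ok (L @ [e])"
    using assms(3) by (intro trace_ok_snoc) (auto intro: justified_by_mono)
  then show ?thesis
    unfolding traced_def by auto
qed

lemma eval_imp_traced: "eval P xs y \<Longrightarrow> traced (triple (recf_code P) (list_encode xs) y)"
proof (induction rule: eval.induct)
  case (eval_Comp xs gs ys f z)
  let ?S = "insert (triple (recf_code f) (list_encode ys) z)
    ((\<lambda>m. triple (recf_code (gs ! m)) (list_encode xs) (ys ! m)) ` {..<length gs})"
  have "length ys = length gs" "\<forall>e\<in>?S. traced e"
    using eval_Comp.IH by (auto simp: list_all2_conv_all_nth)
  then show ?case
    by (intro traced_justified[of ?S] justified_by_Comp) auto
next
  case (eval_Prec0 f xs y g)
  then show ?case
    by (intro traced_justified[of "{triple (recf_code f) (list_encode xs) y}"])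
      (auto simp: justified_by_def justified_def Let_def)
next
  case (eval_PrecS f g n xs y z)
  then show ?case
    by (intro traced_justified[of "{triple (recf_code (Prec f g)) (list_encode (n # xs)) y,
        triple (recf_code g) (list_encode (n # y # xs)) z}"] justified_by_Prec_Suc) auto
next
  case (eval_Mini f n xs)
  have "\<forall>m. \<exists>y. m < n \<longrightarrow> 0 < y \<and> traced (triple (recf_code f) (list_encode (m # xs)) y)"
    using eval_Mini.IH(2) by blast
  then obtain ys
    where ys: "\<And>m. m < n \<Longrightarrow> 0 < ys m \<and> traced (triple (recf_code f) (list_encode (m # xs)) (ys m))"
    by (metis choice)
  let ?S = "insert (triple (recf_code f) (list_encode (n # xs)) 0)
    ((\<lambda>m. triple (recf_code f) (list_encode (m # xs)) (ys m)) ` {..<n})"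
  show ?case
    using eval_Mini.IH(1) ys by (intro traced_justified[of ?S] justified_by_Mini) auto
qed (auto intro!: traced_justified[of "{}"] simp: justified_by_def justified_def Let_def)

inductive_cases eval_ZeroE: "eval Zero xs y"
inductive_cases eval_SuccE: "eval Succ xs y"
inductive_cases eval_ProjE: "eval (Proj i) xs y"
inductive_cases eval_CompE: "eval (Comp f gs) xs y"
inductive_cases eval_PrecE: "eval (Prec f g) xs y"
inductive_cases eval_MiniE: "eval (Mini f) xs y"

lemma eval_deterministic: "eval p xs y \<Longrightarrow> eval p xs y' \<Longrightarrow> y = y'"
proof (induction arbitrary: y' rule: eval.induct)
  case (eval_Comp xs gs ys f z)
  from eval_Comp.prems obtain ys' where ys': "list_all2 (\<lambda>g y. eval g xs y) gs ys'" "eval f ys' y'"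
    by (rule eval_CompE) blast
  have "ys = ys'"
    using eval_Comp.IH(1) ys'(1) by (auto simp: list_all2_conv_all_nth intro: nth_equalityI)
  then show ?case
    using eval_Comp.IH(2) ys'(2) by blast
next
  case (eval_PrecS f g n xs y z)
  from eval_PrecS.prems show ?case
  proof (rule eval_PrecE)
    fix y2 n2 xs2
    assume "Suc n # xs = Suc n2 # xs2" "eval (Prec f g) (n2 # xs2) y2" "eval g (n2 # y2 # xs2) y'"
    then show ?thesis
      using eval_PrecS.IH by auto
  qed simp
next
  case (eval_Mini f n xs)
  from eval_Mini.prems have y': "eval f (y' # xs) 0" "\<forall>m<y'. \<exists>y. eval f (m # xs) y \<and> 0 < y"
    by (rule eval_MiniE, blast)+
  show ?case
  proof (rule linorder_cases[of n y'])
    assume "n < y'"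
    then obtain z where "eval f (n # xs) z" "0 < z"
      using y'(2) by blast
    then show ?thesis
      using eval_Mini.IH(1) by blast
  next
    assume "y' < n"
    then obtain z where "\<forall>z'. eval f (y' # xs) z' \<longrightarrow> z = z'" "0 < z"
      using eval_Mini.IH(2) by blast
    then show ?thesis
      using y'(1) by blast
  qed
next
  case (eval_Prec0 f xs y g)
  from eval_Prec0.prems show ?case
    by (rule eval_PrecE) (use eval_Prec0.IH in auto)
qed (auto elim: eval_ZeroE eval_SuccE eval_ProjE)

lemma certified_sound: "certified (recf_code P) (list_encode xs) y t \<Longrightarrow> eval P xs y"
proof -
  assume "certified (recf_code P) (list_encode xs) y t"
  then obtain Ls j
    where "trace_ok Ls" "j < length Ls" "Ls ! j = triple (recf_code P) (list_encode xs) y"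
    unfolding certified_def
    by (metis list_decode_inverse valid_trace_list_encode code_length_list_encode code_nth_list_encode)
  then show ?thesis
    using trace_ok_sound nth_mem by metis
qed

lemma certified_complete: "eval P xs y \<Longrightarrow> \<exists>t. certified (recf_code P) (list_encode xs) y t"
proof -
  assume "eval P xs y"
  then obtain Ls where "trace_ok Ls" "triple (recf_code P) (list_encode xs) y \<in> set Ls"
    using eval_imp_traced unfolding traced_def by blast
  then have "certified (recf_code P) (list_encode xs) y (list_encode Ls)"
    unfolding certified_def valid_trace_list_encode[symmetric]
    by (intro exI[of _ "list_encode Ls"]) (auto simp: in_set_conv_nth)
  then show ?thesis ..
qed

lemma certified_mono: "certified c x y t \<Longrightarrow> t \<le> t' \<Longrightarrow> certified c x y t'"
  unfolding certified_def by (meson le_imp_less_Suc less_Suc_eq_le order_trans)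

text \<open>Freezing the output at the first time some output is certified makes it independent of the
  time bound from then on, even for numbers that code no program and may be certified with
  several outputs.\<close>

definition halts_within :: "nat \<Rightarrow> nat \<Rightarrow> nat \<Rightarrow> bool" where
  "halts_within c x n = (\<exists>y<Suc n. certified c x y n)"

definition halting_time :: "nat \<Rightarrow> nat \<Rightarrow> nat \<Rightarrow> nat" where
  "halting_time c x n = bounded_least (Suc n) (\<lambda>t. halts_within c x t)"

definition result :: "nat \<Rightarrow> nat \<Rightarrow> nat \<Rightarrow> nat" where
  "result c x n = bounded_least (Suc n) (\<lambda>y. certified c x y (halting_time c x n))"

lemma recursive_halts_within: "recursive_pred 3 (\<lambda>xs. halts_within (xs ! 0) (xs ! 1) (xs ! 2))"
  unfolding halts_within_def by (intro recursive_intros | simp_all only: index_simps)+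

lemmas recursive_pred_halts_within [recursive_intros] =
  recursive_pred_comp3[OF recursive_halts_within]

lemma recursive_halting_time: "recursive_nat 3 (\<lambda>xs. halting_time (xs ! 0) (xs ! 1) (xs ! 2))"
  unfolding halting_time_def by (intro recursive_intros | simp_all only: index_simps)+

lemmas recursive_nat_halting_time [recursive_intros] = recursive_nat_comp3[OF recursive_halting_time]

lemma recursive_result: "recursive_nat 3 (\<lambda>xs. result (xs ! 0) (xs ! 1) (xs ! 2))"
  unfolding result_def by (intro recursive_intros | simp_all only: index_simps)+

lemmas recursive_nat_result [recursive_intros] = recursive_nat_comp3[OF recursive_result]

lemma halts_within_mono: "halts_within c x n \<Longrightarrow> n \<le> n' \<Longrightarrow> halts_within c x n'"
  unfolding halts_within_def using certified_mono
  by (meson le_imp_less_Suc less_Suc_eq_le order_trans)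

lemma halting_time_spec:
  assumes "halts_within c x n"
  shows "halting_time c x n \<le> n" "halts_within c x (halting_time c x n)"
    "halting_time c x n = (LEAST t. halts_within c x t)"
proof -
  have ex: "\<exists>t<Suc n. halts_within c x t"
    using assms by blast
  show "halting_time c x n \<le> n" "halts_within c x (halting_time c x n)"
    using bounded_least_spec(1,2)[OF ex] unfolding halting_time_def by simp_all
  show "halting_time c x n = (LEAST t. halts_within c x t)"
    using bounded_least_eq_Least[OF ex] unfolding halting_time_def .
qed

lemma result_spec:
  assumes "halts_within c x n"
  shows "certified c x (result c x n) (halting_time c x n)"
    "result c x n = (LEAST y. certified c x y (halting_time c x n))"
proof -
  obtain y where "y < Suc (halting_time c x n)" "certified c x y (halting_time c x n)"
    using halting_time_spec(2)[OF assms] unfolding halts_within_def by blast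
  then have ex: "\<exists>y<Suc n. certified c x y (halting_time c x n)"
    using halting_time_spec(1)[OF assms] by (intro exI[of _ y]) auto
  show "certified c x (result c x n) (halting_time c x n)"
    using bounded_least_spec(1)[OF ex] unfolding result_def .
  show "result c x n = (LEAST y. certified c x y (halting_time c x n))"
    using bounded_least_eq_Least[OF ex] unfolding result_def .
qed

lemma result_stable:
  assumes "halts_within c x n" "n \<le> n'"
  shows "result c x n' = result c x n"
proof -
  have "halts_within c x n'"
    using halts_within_mono assms by blast
  then show ?thesis
    using assms(1) halting_time_spec(3) result_spec(2) by metis
qed

lemma result_eval:
  "eval p xs v \<Longrightarrow> halts_within (recf_code p) (list_encode xs) n \<Longrightarrow>
    result (recf_code p) (list_encode xs) n = v"
  using result_spec(1) certified_sound eval_deterministic by blast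

lemma eventually_halts_within:
  assumes "eval p xs v"
  shows "eventually (\<lambda>n. halts_within (recf_code p) (list_encode xs) n) sequentially"
proof -
  obtain t where "certified (recf_code p) (list_encode xs) v t"
    using certified_complete[OF assms] by blast
  then have "halts_within (recf_code p) (list_encode xs) n" if "n \<ge> t + v" for n
    unfolding halts_within_def using that certified_mono by (intro exI[of _ v]) auto
  then show ?thesis
    unfolding eventually_sequentially by blast
qed

section \<open>Supermartingale multipliers for an interval forecast\<close>

definition expectation :: "real \<Rightarrow> (bool \<Rightarrow> real) \<Rightarrow> real" where
  "expectation p f = p * f True + (1 - p) * f False"

lemma expectation_le_1_between:
  assumes "a \<le> p" "p \<le> b" "expectation a f \<le> 1" "expectation b f \<le> 1"
  shows "expectation p f \<le> 1"
proof -
  have affine: "expectation q f = f False + q * (f True - f False)" for q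
    unfolding expectation_def by algebra
  show ?thesis
  proof (cases "f False \<le> f True")
    case True
    then have "p * (f True - f False) \<le> b * (f True - f False)"
      using assms(2) by (simp add: mult_right_mono)
    then show ?thesis
      using assms(4) unfolding affine by linarith
  next
    case False
    then have "p * (f True - f False) \<le> a * (f True - f False)"
      using assms(1) by (simp add: mult_right_mono_neg)
    then show ?thesis
      using assms(3) unfolding affine by linarith
  qed
qed

lemma expectation_mono:
  "0 \<le> p \<Longrightarrow> p \<le> 1 \<Longrightarrow> (\<And>x. f x \<le> g x) \<Longrightarrow> expectation p f \<le> expectation p g"
  unfolding expectation_def by (intro add_mono mult_left_mono) auto

lemma cross_mult_expectation_le_1_iff:
  fixes an ad n1 e1 n0 e0 :: nat
  assumes "0 < ad" "an \<le> ad" "0 < e1" "0 < e0"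
  shows "an * n1 * e0 + (ad - an) * n0 * e1 \<le> ad * e1 * e0 \<longleftrightarrow>
    expectation (real an / real ad) (\<lambda>x. if x then real n1 / real e1 else real n0 / real e0) \<le> 1"
proof -
  have "an * n1 * e0 + (ad - an) * n0 * e1 \<le> ad * e1 * e0 \<longleftrightarrow>
      real an * real n1 * real e0 + (real ad - real an) * real n0 * real e1 \<le>
        real ad * real e1 * real e0"
    using assms(2) by (simp flip: of_nat_mult of_nat_add of_nat_diff add: of_nat_le_iff)
  moreover have
    "expectation (real an / real ad) (\<lambda>x. if x then real n1 / real e1 else real n0 / real e0) =
      (real an * real n1 * real e0 + (real ad - real an) * real n0 * real e1) /
        (real ad * real e1 * real e0)"
    using assms unfolding expectation_def by (simp add: field_simps)
  moreover have "0 < real ad * real e1 * real e0"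
    using assms by simp
  ultimately show ?thesis
    by (simp add: pos_divide_le_eq)
qed

lemma expectation_le_upper_exp:
  assumes "0 \<le> a" "b \<le> 1" "p \<in> {a..b}"
  shows "expectation p f \<le> upper_exp {a..b} f"
  unfolding upper_exp_def expectation_def
proof (rule cSUP_upper[OF assms(3)])
  have bound: "q * x \<le> \<bar>x\<bar>" if "0 \<le> q" "q \<le> 1" for q x :: real
    using mult_left_mono[OF abs_ge_self[of x] that(1)] mult_left_le_one_le[OF abs_ge_zero that, of x]
    by linarith
  have "p * f True + (1 - p) * f False \<le> \<bar>f True\<bar> + \<bar>f False\<bar>" if "0 \<le> p" "p \<le> 1" for p
    using that by (intro add_mono bound) auto
  then show "bdd_above ((\<lambda>p. p * f True + (1 - p) * f False) ` {a..b})"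
    using assms by (intro bdd_aboveI2[of _ _ "\<bar>f True\<bar> + \<bar>f False\<bar>"]) auto
qed

lemma supermartingale_multiplier_iff_endpoints:
  assumes "0 \<le> a" "a \<le> b" "b \<le> 1"
  shows "supermartingale_multiplier {a..b} D \<longleftrightarrow>
    (\<forall>s. expectation a (D s) \<le> 1 \<and> expectation b (D s) \<le> 1)"
proof -
  have "upper_exp {a..b} (D s) \<le> 1 \<longleftrightarrow> expectation a (D s) \<le> 1 \<and> expectation b (D s) \<le> 1" for s
  proof
    assume "upper_exp {a..b} (D s) \<le> 1"
    then show "expectation a (D s) \<le> 1 \<and> expectation b (D s) \<le> 1"
      using expectation_le_upper_exp[OF assms(1,3)] assms(2)
      by (meson atLeastAtMost_iff order_refl order_trans)
  next
    assume "expectation a (D s) \<le> 1 \<and> expectation b (D s) \<le> 1"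
    then show "upper_exp {a..b} (D s) \<le> 1"
      unfolding upper_exp_def using assms(2) expectation_le_1_between
      by (intro cSUP_least) (auto simp: expectation_def)
  qed
  then show ?thesis
    unfolding supermartingale_multiplier_def by blast
qed

lemma test_supermartingale_generated:
  assumes ab: "0 \<le> a" "a \<le> b" "b \<le> 1"
    and D: "nonneg_multiplier D" "supermartingale_multiplier {a..b} D"
  shows "test_supermartingale {a..b} (generated D)"
  unfolding test_supermartingale_def
proof (intro conjI allI)
  fix s
  have nonneg: "0 \<le> generated D s"
    unfolding generated_def using D(1) by (auto simp: nonneg_multiplier_def intro: prod_nonneg)
  then show "0 \<le> generated D s" .
  have step: "generated D (s @ [x]) = generated D s * D s x" for x
    unfolding generated_def by (simp add: nth_append)
  show "upper_exp {a..b} (\<lambda>x. generated D (s @ [x]) - generated D s) \<le> 0"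
    unfolding upper_exp_def
  proof (rule cSUP_least)
    fix p
    assume p: "p \<in> {a..b}"
    have "expectation p (D s) \<le> 1"
      using expectation_le_upper_exp[OF ab(1,3) p] D(2) unfolding supermartingale_multiplier_def
      by (meson order_trans)
    then have "generated D s * (expectation p (D s) - 1) \<le> 0"
      using nonneg by (simp add: mult_nonneg_nonpos)
    then show "p * (generated D (s @ [True]) - generated D s) +
        (1 - p) * (generated D (s @ [False]) - generated D s) \<le> 0"
      unfolding step expectation_def by argo
  qed (use ab in simp)
qed (simp add: generated_def)

text \<open>The subtraction is on natural numbers, so negative approximations are replaced by 0.\<close>

definition arg_code :: "nat \<Rightarrow> nat \<Rightarrow> nat \<Rightarrow> nat" where
  "arg_code sc xb j = code_cons sc (code_cons xb (code_cons j 0))"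

definition prog_u :: "nat \<Rightarrow> nat" where "prog_u i = pair_fst i"
definition prog_v :: "nat \<Rightarrow> nat" where "prog_v i = pair_fst (pair_snd i)"
definition prog_w :: "nat \<Rightarrow> nat" where "prog_w i = pair_snd (pair_snd i)"

definition approx_known :: "nat \<Rightarrow> nat \<Rightarrow> nat \<Rightarrow> nat \<Rightarrow> bool" where
  "approx_known i sc j n =
    (\<forall>xb<2. halts_within (prog_u i) (arg_code sc xb j) n \<and>
      halts_within (prog_v i) (arg_code sc xb j) n \<and> halts_within (prog_w i) (arg_code sc xb j) n)"

definition approx_num :: "nat \<Rightarrow> nat \<Rightarrow> nat \<Rightarrow> nat \<Rightarrow> nat \<Rightarrow> nat" where
  "approx_num i sc xb j n =
    result (prog_u i) (arg_code sc xb j) n - result (prog_v i) (arg_code sc xb j) n"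

definition approx_den :: "nat \<Rightarrow> nat \<Rightarrow> nat \<Rightarrow> nat \<Rightarrow> nat \<Rightarrow> nat" where
  "approx_den i sc xb j n = Suc (result (prog_w i) (arg_code sc xb j) n)"

definition approx :: "nat \<Rightarrow> nat \<Rightarrow> nat \<Rightarrow> nat \<Rightarrow> nat \<Rightarrow> real" where
  "approx i sc xb j n = real (approx_num i sc xb j n) / real (approx_den i sc xb j n)"

definition known_upto :: "nat \<Rightarrow> nat \<Rightarrow> nat \<Rightarrow> nat \<Rightarrow> bool" where
  "known_upto i sc m n = (\<forall>j<Suc m. approx_known i sc j n)"

definition best_index :: "nat \<Rightarrow> nat \<Rightarrow> nat \<Rightarrow> nat \<Rightarrow> nat \<Rightarrow> nat" where
  "best_index i sc xb m n = bounded_least (Suc m) (\<lambda>j. \<forall>j'<Suc m.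
    approx_num i sc xb j' n * approx_den i sc xb j n \<le>
      approx_num i sc xb j n * approx_den i sc xb j' n)"

definition best_num :: "nat \<Rightarrow> nat \<Rightarrow> nat \<Rightarrow> nat \<Rightarrow> nat \<Rightarrow> nat" where
  "best_num i sc xb m n = approx_num i sc xb (best_index i sc xb m n) n"

definition best_den :: "nat \<Rightarrow> nat \<Rightarrow> nat \<Rightarrow> nat \<Rightarrow> nat \<Rightarrow> nat" where
  "best_den i sc xb m n = approx_den i sc xb (best_index i sc xb m n) n"

definition best_approx :: "nat \<Rightarrow> nat \<Rightarrow> nat \<Rightarrow> nat \<Rightarrow> nat \<Rightarrow> real" where
  "best_approx i sc xb m n = approx i sc xb (best_index i sc xb m n) n"

lemma arg_code_eq: "arg_code sc xb j = list_encode [sc, xb, j]"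
  by (simp add: arg_code_def code_cons_def)

lemma recursive_nat_arg_code [recursive_intros]:
  "recursive_nat k f \<Longrightarrow> recursive_nat k g \<Longrightarrow> recursive_nat k h \<Longrightarrow>
    recursive_nat k (\<lambda>xs. arg_code (f xs) (g xs) (h xs))"
  unfolding arg_code_def by (intro recursive_intros)

lemma recursive_approx_known:
  "recursive_pred 4 (\<lambda>xs. approx_known (xs ! 0) (xs ! 1) (xs ! 2) (xs ! 3))"
  unfolding approx_known_def prog_u_def prog_v_def prog_w_def
  by (intro recursive_intros | simp_all only: index_simps)+

lemma recursive_approx_num:
  "recursive_nat 5 (\<lambda>xs. approx_num (xs ! 0) (xs ! 1) (xs ! 2) (xs ! 3) (xs ! 4))"
  unfolding approx_num_def prog_u_def prog_v_def
  by (intro recursive_intros | simp_all only: index_simps)+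

lemma recursive_approx_den:
  "recursive_nat 5 (\<lambda>xs. approx_den (xs ! 0) (xs ! 1) (xs ! 2) (xs ! 3) (xs ! 4))"
  unfolding approx_den_def prog_w_def by (intro recursive_intros | simp_all only: index_simps)+

lemmas recursive_pred_approx_known [recursive_intros] =
  recursive_pred_comp4[OF recursive_approx_known]
lemmas recursive_nat_approx_num [recursive_intros] = recursive_nat_comp5[OF recursive_approx_num]
lemmas recursive_nat_approx_den [recursive_intros] = recursive_nat_comp5[OF recursive_approx_den]

lemma recursive_known_upto: "recursive_pred 4 (\<lambda>xs. known_upto (xs ! 0) (xs ! 1) (xs ! 2) (xs ! 3))"
  unfolding known_upto_def by (intro recursive_intros | simp_all only: index_simps)+

lemma recursive_best_index:
  "recursive_nat 5 (\<lambda>xs. best_index (xs ! 0) (xs ! 1) (xs ! 2) (xs ! 3) (xs ! 4))"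
  unfolding best_index_def by (intro recursive_intros | simp_all only: index_simps)+

lemmas recursive_pred_known_upto [recursive_intros] = recursive_pred_comp4[OF recursive_known_upto]
lemmas recursive_nat_best_index [recursive_intros] = recursive_nat_comp5[OF recursive_best_index]

lemma recursive_nat_best_num [recursive_intros]:
  "recursive_nat k i \<Longrightarrow> recursive_nat k sc \<Longrightarrow> recursive_nat k xb \<Longrightarrow> recursive_nat k m \<Longrightarrow>
    recursive_nat k n \<Longrightarrow> recursive_nat k (\<lambda>xs. best_num (i xs) (sc xs) (xb xs) (m xs) (n xs))"
  unfolding best_num_def by (intro recursive_intros)

lemma recursive_nat_best_den [recursive_intros]:
  "recursive_nat k i \<Longrightarrow> recursive_nat k sc \<Longrightarrow> recursive_nat k xb \<Longrightarrow> recursive_nat k m \<Longrightarrow>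
    recursive_nat k n \<Longrightarrow> recursive_nat k (\<lambda>xs. best_den (i xs) (sc xs) (xb xs) (m xs) (n xs))"
  unfolding best_den_def by (intro recursive_intros)

lemma approx_den_pos: "0 < approx_den i sc xb j n"
  by (simp add: approx_den_def)

lemma approx_nonneg: "0 \<le> approx i sc xb j n"
  by (simp add: approx_def)

lemma best_approx_eq:
  "best_approx i sc xb m n = real (best_num i sc xb m n) / real (best_den i sc xb m n)"
  by (simp add: best_approx_def approx_def best_num_def best_den_def)

lemma cross_mult_le_iff:
  fixes a b c d :: nat
  assumes "0 < b" "0 < d"
  shows "a * d \<le> c * b \<longleftrightarrow> real a / real b \<le> real c / real d"
proof -
  have "real a / real b \<le> real c / real d \<longleftrightarrow> real a * real d \<le> real c * real b"
    using assms by (simp add: field_simps)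
  then show ?thesis
    by (metis of_nat_le_iff of_nat_mult)
qed

lemma best_index_spec:
  "best_index i sc xb m n \<le> m" "j \<le> m \<Longrightarrow> approx i sc xb j n \<le> best_approx i sc xb m n"
proof -
  let ?P = "\<lambda>j. \<forall>j'<Suc m.
    approx_num i sc xb j' n * approx_den i sc xb j n \<le>
      approx_num i sc xb j n * approx_den i sc xb j' n"
  have P: "?P j \<longleftrightarrow> (\<forall>j'\<le>m. approx i sc xb j' n \<le> approx i sc xb j n)" for j
    unfolding approx_def less_Suc_eq_le using cross_mult_le_iff[OF approx_den_pos approx_den_pos]
    by simp
  define M where "M = Max ((\<lambda>j. approx i sc xb j n) ` {..m})"
  have "M \<in> (\<lambda>j. approx i sc xb j n) ` {..m}"
    unfolding M_def by (intro Max_in) auto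
  then obtain k where "k \<le> m" "approx i sc xb k n = M"
    by auto
  moreover have "approx i sc xb j' n \<le> M" if "j' \<le> m" for j'
    unfolding M_def using that by (intro Max_ge) auto
  ultimately have ex: "\<exists>j<Suc m. ?P j"
    unfolding P by (intro exI[of _ k]) auto
  show "best_index i sc xb m n \<le> m"
    using bounded_least_spec(2)[OF ex] unfolding best_index_def by simp
  have "?P (best_index i sc xb m n)"
    using bounded_least_spec(1)[OF ex] unfolding best_index_def .
  then show "j \<le> m \<Longrightarrow> approx i sc xb j n \<le> best_approx i sc xb m n"
    unfolding P best_approx_def by blast
qed

lemma best_approx_mono: "m \<le> m' \<Longrightarrow> best_approx i sc xb m n \<le> best_approx i sc xb m' n"
  using best_index_spec(1)[of i sc xb m n]
    best_index_spec(2)[of "best_index i sc xb m n" m' i sc xb n]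
  unfolding best_approx_def by simp

lemma known_upto_mono: "known_upto i sc m n \<Longrightarrow> n \<le> n' \<Longrightarrow> known_upto i sc m n'"
  unfolding known_upto_def approx_known_def using halts_within_mono by blast

lemma approx_stable:
  assumes "known_upto i sc m n" "n \<le> n'" "j \<le> m" "xb < 2"
  shows "approx_num i sc xb j n' = approx_num i sc xb j n"
    "approx_den i sc xb j n' = approx_den i sc xb j n"
proof -
  have "approx_known i sc j n"
    using assms(1,3) unfolding known_upto_def by auto
  then have "halts_within (prog_u i) (arg_code sc xb j) n"
    "halts_within (prog_v i) (arg_code sc xb j) n"
    "halts_within (prog_w i) (arg_code sc xb j) n"
    using assms(4) unfolding approx_known_def by auto
  then show "approx_num i sc xb j n' = approx_num i sc xb j n"
    "approx_den i sc xb j n' = approx_den i sc xb j n"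
    unfolding approx_num_def approx_den_def using result_stable[OF _ assms(2)] by simp_all
qed

lemma best_stable:
  assumes "known_upto i sc m n" "n \<le> n'" "xb < 2"
  shows "best_num i sc xb m n' = best_num i sc xb m n" "best_den i sc xb m n' = best_den i sc xb m n"
    "best_approx i sc xb m n' = best_approx i sc xb m n"
proof -
  have "best_index i sc xb m n' = best_index i sc xb m n"
    unfolding best_index_def
  proof (rule bounded_least_cong)
    fix j
    assume "j < Suc m"
    then show "(\<forall>j'<Suc m. approx_num i sc xb j' n' * approx_den i sc xb j n' \<le>
        approx_num i sc xb j n' * approx_den i sc xb j' n') =
      (\<forall>j'<Suc m. approx_num i sc xb j' n * approx_den i sc xb j n \<le>
        approx_num i sc xb j n * approx_den i sc xb j' n)"
      using approx_stable[OF assms(1,2) _ assms(3)] by (simp add: less_Suc_eq_le)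
  qed
  then show "best_num i sc xb m n' = best_num i sc xb m n"
    "best_den i sc xb m n' = best_den i sc xb m n"
    "best_approx i sc xb m n' = best_approx i sc xb m n"
    unfolding best_num_def best_den_def best_approx_def approx_def
    using approx_stable[OF assms(1,2) best_index_spec(1) assms(3)] by simp_all
qed

lemma monus_div_eq_max:
  fixes u v w :: nat
  shows "real (u - v) / real (Suc w) = max 0 (real_of_rat ((of_nat u - of_nat v) / of_nat (w + 1)))"
proof (cases "v \<le> u")
  case True
  then show ?thesis
    by (simp add: of_rat_divide of_nat_diff of_rat_diff of_rat_add)
next
  case False
  then have "(real u - real v) / (real w + 1) \<le> 0"
    by (simp add: divide_nonpos_pos)
  then show ?thesis
    using False by (simp add: of_rat_divide max_def of_rat_diff of_rat_add add.commute)
qed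

context
  fixes pu pv pw :: recf and u v w :: "nat list \<Rightarrow> nat" and i :: nat
  assumes computes: "\<And>xs. length xs = 3 \<Longrightarrow> eval pu xs (u xs) \<and> eval pv xs (v xs) \<and> eval pw xs (w xs)"
    and index: "i = prod_encode (recf_code pu, prod_encode (recf_code pv, recf_code pw))"
begin

lemma approx_known_program_triple:
  "approx_known i sc j n \<longleftrightarrow> (\<forall>xb\<in>{..<2}.
    halts_within (recf_code pu) (list_encode [sc, xb, j]) n \<and>
    halts_within (recf_code pv) (list_encode [sc, xb, j]) n \<and>
    halts_within (recf_code pw) (list_encode [sc, xb, j]) n)"
  by (simp add: approx_known_def index prog_u_def prog_v_def prog_w_def arg_code_eq Ball_def)

lemma approx_program_triple:
  assumes "approx_known i sc j n" "xb < 2"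
  shows "approx i sc xb j n = real (u [sc, xb, j] - v [sc, xb, j]) / real (Suc (w [sc, xb, j]))"
proof -
  have "halts_within (recf_code pu) (list_encode [sc, xb, j]) n"
    "halts_within (recf_code pv) (list_encode [sc, xb, j]) n"
    "halts_within (recf_code pw) (list_encode [sc, xb, j]) n"
    using assms unfolding approx_known_program_triple by auto
  moreover have "eval pu [sc, xb, j] (u [sc, xb, j])" "eval pv [sc, xb, j] (v [sc, xb, j])"
    "eval pw [sc, xb, j] (w [sc, xb, j])"
    using computes by simp_all
  ultimately show ?thesis
    unfolding approx_def approx_num_def approx_den_def index prog_u_def prog_v_def prog_w_def
      pair_fst_encode pair_snd_encode arg_code_eq
    by (simp only: result_eval)
qed

lemma eventually_approx_known_program_triple: "eventually (\<lambda>n. approx_known i sc j n) sequentially"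
proof -
  have "eval pu [sc, xb, j] (u [sc, xb, j])" "eval pv [sc, xb, j] (v [sc, xb, j])"
    "eval pw [sc, xb, j] (w [sc, xb, j])" for xb
    using computes by simp_all
  then show ?thesis
    unfolding approx_known_program_triple
    by (intro eventually_ball_finite ballI eventually_conj eventually_halts_within) simp_all
qed

end

lemma lower_semicomputable_index:
  assumes "lower_semicomputable_multiplier D"
  obtains i and r :: "bool list \<Rightarrow> bool \<Rightarrow> nat \<Rightarrow> rat"
  where "\<And>s x. mono (r s x)" "\<And>s x. (\<lambda>n. real_of_rat (r s x n)) \<longlonglongrightarrow> D s x"
    "\<And>s x j n. approx_known i (str_code s) j n \<Longrightarrow>
      approx i (str_code s) (of_bool x) j n = max 0 (real_of_rat (r s x j))"
    "\<And>s j. eventually (\<lambda>n. approx_known i (str_code s) j n) sequentially"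
proof -
  obtain r g where g: "recursive_rat 3 g" "\<And>s x n. r s x n = g [str_code s, of_bool x, n]"
    and r: "\<And>s x. mono (r s x)" "\<And>s x. (\<lambda>n. real_of_rat (r s x n)) \<longlonglongrightarrow> D s x"
    using assms unfolding lower_semicomputable_multiplier_def by blast
  obtain u v w where "recursive_nat 3 u" "recursive_nat 3 v" "recursive_nat 3 w"
    and g_eq: "\<And>xs. length xs = 3 \<Longrightarrow> g xs = (of_nat (u xs) - of_nat (v xs)) / of_nat (w xs + 1)"
    using g(1) unfolding recursive_rat_def by blast
  then obtain pu pv pw
    where computes: "\<And>xs. length xs = 3 \<Longrightarrow> eval pu xs (u xs) \<and> eval pv xs (v xs) \<and> eval pw xs (w xs)"
    unfolding recursive_nat_def by metis
  define i where "i = prod_encode (recf_code pu, prod_encode (recf_code pv, recf_code pw))"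
  show ?thesis
  proof (rule that[OF r])
    fix s x j n
    let ?xs = "[str_code s, of_bool x, j]"
    assume "approx_known i (str_code s) j n"
    then have "approx i (str_code s) (of_bool x) j n = real (u ?xs - v ?xs) / real (Suc (w ?xs))"
      using approx_program_triple[OF computes i_def] by simp
    moreover have "r s x j = (of_nat (u ?xs) - of_nat (v ?xs)) / of_nat (w ?xs + 1)"
      using g(2) g_eq[of ?xs] by simp
    ultimately show "approx i (str_code s) (of_bool x) j n = max 0 (real_of_rat (r s x j))"
      by (simp only: monus_div_eq_max)
  qed (rule eventually_approx_known_program_triple[OF computes i_def])
qed

section \<open>The enumeration for a rational interval forecast\<close>

locale rational_forecast =
  fixes an ad bn bd :: nat
  assumes lower_pos: "0 < an" and lower_less: "an < ad" and upper_less: "bn < bd"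
    and lower_le_upper: "real an / real ad \<le> real bn / real bd"
begin

abbreviation lower :: real where "lower \<equiv> real an / real ad"
abbreviation upper :: real where "upper \<equiv> real bn / real bd"

lemma lower_upper_bounds: "0 < lower" "lower < 1" "0 \<le> upper" "upper \<le> 1"
  using lower_pos lower_less upper_less by auto

definition admissible :: "nat \<Rightarrow> nat \<Rightarrow> nat \<Rightarrow> nat \<Rightarrow> bool" where
  "admissible i sc m n \<longleftrightarrow>
    an * best_num i sc 1 m n * best_den i sc 0 m n +
      (ad - an) * best_num i sc 0 m n * best_den i sc 1 m n \<le>
        ad * best_den i sc 1 m n * best_den i sc 0 m n \<and>
    bn * best_num i sc 1 m n * best_den i sc 0 m n +
      (bd - bn) * best_num i sc 0 m n * best_den i sc 1 m n \<le>
        bd * best_den i sc 1 m n * best_den i sc 0 m n"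

definition good :: "nat \<Rightarrow> nat \<Rightarrow> nat \<Rightarrow> nat \<Rightarrow> bool" where
  "good i sc m n \<longleftrightarrow> known_upto i sc m n \<and> admissible i sc m n"

definition some_good :: "nat \<Rightarrow> nat \<Rightarrow> nat \<Rightarrow> bool" where
  "some_good i sc n \<longleftrightarrow> (\<exists>m<Suc n. good i sc m n)"

definition max_good :: "nat \<Rightarrow> nat \<Rightarrow> nat \<Rightarrow> nat" where
  "max_good i sc n = n - bounded_least (Suc n) (\<lambda>d. good i sc (n - d) n)"

text \<open>Taking the longest admissible initial segment, rather than all known approximations, keeps
  every stage admissible; since knowledge and admissibility persist, the stages still increase.\<close>

definition stage_num :: "nat \<Rightarrow> nat \<Rightarrow> nat \<Rightarrow> nat \<Rightarrow> nat" where
  "stage_num i sc xb n = (if some_good i sc n then best_num i sc xb (max_good i sc n) n else 0)"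

definition stage_den :: "nat \<Rightarrow> nat \<Rightarrow> nat \<Rightarrow> nat \<Rightarrow> nat" where
  "stage_den i sc xb n = (if some_good i sc n then best_den i sc xb (max_good i sc n) n else 1)"

definition stage_mult :: "nat \<Rightarrow> nat \<Rightarrow> nat \<Rightarrow> nat \<Rightarrow> real" where
  "stage_mult i sc xb n = real (stage_num i sc xb n) / real (stage_den i sc xb n)"

definition prod_num :: "nat \<Rightarrow> nat \<Rightarrow> nat \<Rightarrow> nat" where
  "prod_num i sc n = (\<Prod>k<str_len sc. stage_num i (str_take k sc) (str_bit k sc) n)"

definition prod_den :: "nat \<Rightarrow> nat \<Rightarrow> nat \<Rightarrow> nat" where
  "prod_den i sc n = (\<Prod>k<str_len sc. stage_den i (str_take k sc) (str_bit k sc) n)"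

definition limit_mult :: "nat \<Rightarrow> nat \<Rightarrow> nat \<Rightarrow> real" where
  "limit_mult i sc xb = (SUP n. stage_mult i sc xb n)"

definition enum_mult :: "nat \<Rightarrow> bool list \<Rightarrow> bool \<Rightarrow> real" where
  "enum_mult i s x = limit_mult i (str_code s) (of_bool x)"

definition enum_approx :: "nat \<Rightarrow> bool list \<Rightarrow> nat \<Rightarrow> rat" where
  "enum_approx i s n = of_nat (prod_num i (str_code s) n) / of_nat (prod_den i (str_code s) n)"

lemma recursive_admissible: "recursive_pred 4 (\<lambda>xs. admissible (xs ! 0) (xs ! 1) (xs ! 2) (xs ! 3))"
  unfolding admissible_def by (intro recursive_intros | simp_all only: index_simps)+

lemma recursive_good: "recursive_pred 4 (\<lambda>xs. good (xs ! 0) (xs ! 1) (xs ! 2) (xs ! 3))"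
  unfolding good_def
  by (intro recursive_intros recursive_pred_comp4[OF recursive_admissible]
      | simp_all only: index_simps)+

lemmas recursive_pred_good [recursive_intros] = recursive_pred_comp4[OF recursive_good]

lemma recursive_some_good: "recursive_pred 3 (\<lambda>xs. some_good (xs ! 0) (xs ! 1) (xs ! 2))"
  unfolding some_good_def by (intro recursive_intros | simp_all only: index_simps)+

lemma recursive_max_good: "recursive_nat 3 (\<lambda>xs. max_good (xs ! 0) (xs ! 1) (xs ! 2))"
  unfolding max_good_def by (intro recursive_intros | simp_all only: index_simps)+

lemma recursive_stage_num: "recursive_nat 4 (\<lambda>xs. stage_num (xs ! 0) (xs ! 1) (xs ! 2) (xs ! 3))"
  unfolding stage_num_def
  by (intro recursive_intros recursive_pred_comp3[OF recursive_some_good]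
      recursive_nat_comp3[OF recursive_max_good] | simp_all only: index_simps)+

lemma recursive_stage_den: "recursive_nat 4 (\<lambda>xs. stage_den (xs ! 0) (xs ! 1) (xs ! 2) (xs ! 3))"
  unfolding stage_den_def
  by (intro recursive_intros recursive_pred_comp3[OF recursive_some_good]
      recursive_nat_comp3[OF recursive_max_good] | simp_all only: index_simps)+

lemma recursive_prod_num: "recursive_nat 3 (\<lambda>xs. prod_num (xs ! 0) (xs ! 1) (xs ! 2))"
  unfolding prod_num_def
  by (intro recursive_intros recursive_nat_comp4[OF recursive_stage_num]
      | simp_all only: index_simps)+

lemma recursive_prod_den: "recursive_nat 3 (\<lambda>xs. prod_den (xs ! 0) (xs ! 1) (xs ! 2))"
  unfolding prod_den_def
  by (intro recursive_intros recursive_nat_comp4[OF recursive_stage_den]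
      | simp_all only: index_simps)+

lemma admissible_iff:
  "admissible i sc m n \<longleftrightarrow>
    expectation lower (\<lambda>x. best_approx i sc (of_bool x) m n) \<le> 1 \<and>
    expectation upper (\<lambda>x. best_approx i sc (of_bool x) m n) \<le> 1"
proof -
  have eq: "(\<lambda>x. best_approx i sc (of_bool x) m n) =
      (\<lambda>x. if x then real (best_num i sc 1 m n) / real (best_den i sc 1 m n)
        else real (best_num i sc 0 m n) / real (best_den i sc 0 m n))"
    by (simp add: best_approx_eq fun_eq_iff)
  have pos: "0 < best_den i sc xb m n" for xb
    by (simp add: best_den_def approx_den_pos)
  show ?thesis
    unfolding admissible_def eq
    by (intro conj_cong cross_mult_expectation_le_1_iff pos) (use lower_less upper_less in auto)
qed

lemma good_stable: "good i sc m n \<Longrightarrow> n \<le> n' \<Longrightarrow> good i sc m n'"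
  unfolding good_def admissible_def using best_stable[of i sc m n n' 0] best_stable[of i sc m n n' 1]
  by (auto intro: known_upto_mono)

lemma max_good_spec:
  assumes "some_good i sc n"
  shows "good i sc (max_good i sc n) n" "max_good i sc n \<le> n"
    "\<And>m. good i sc m n \<Longrightarrow> m \<le> n \<Longrightarrow> m \<le> max_good i sc n"
proof -
  let ?P = "\<lambda>d. good i sc (n - d) n"
  obtain m where "m < Suc n" "good i sc m n"
    using assms unfolding some_good_def by blast
  then have ex: "\<exists>d<Suc n. ?P d"
    by (intro exI[of _ "n - m"]) auto
  show "good i sc (max_good i sc n) n"
    using bounded_least_spec(1)[OF ex] unfolding max_good_def .
  show "max_good i sc n \<le> n"
    unfolding max_good_def by simp
  show "m \<le> max_good i sc n" if "good i sc m n" "m \<le> n" for m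
  proof -
    have "\<not> n - m < bounded_least (Suc n) ?P"
      using bounded_least_spec(3)[OF ex, of "n - m"] that by auto
    then show ?thesis
      unfolding max_good_def using that(2) by simp
  qed
qed

lemma stage_mult_eq:
  "stage_mult i sc xb n = (if some_good i sc n then best_approx i sc xb (max_good i sc n) n else 0)"
  by (simp add: stage_mult_def stage_num_def stage_den_def best_approx_eq)

lemma stage_den_pos: "0 < stage_den i sc xb n"
  by (simp add: stage_den_def best_den_def approx_den_pos)

lemma stage_mult_nonneg: "0 \<le> stage_mult i sc xb n"
  by (simp add: stage_mult_def)

lemma stage_mult_mono:
  assumes "xb < 2" "n \<le> n'"
  shows "stage_mult i sc xb n \<le> stage_mult i sc xb n'"
proof (cases "some_good i sc n")
  case False
  then show ?thesis
    using stage_mult_nonneg by (simp add: stage_mult_eq)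
next
  case True
  let ?m = "max_good i sc n"
  have "good i sc ?m n'" "?m \<le> n'"
    using max_good_spec[OF True] good_stable assms(2) by auto
  moreover from this have some: "some_good i sc n'"
    unfolding some_good_def using le_imp_less_Suc by blast
  ultimately have "?m \<le> max_good i sc n'"
    using max_good_spec(3) by blast
  have "stage_mult i sc xb n = best_approx i sc xb ?m n'"
    using True max_good_spec(1)[OF True] best_stable(3)[OF _ assms(2,1)]
    by (simp add: stage_mult_eq good_def)
  also have "\<dots> \<le> stage_mult i sc xb n'"
    using some best_approx_mono[OF \<open>?m \<le> max_good i sc n'\<close>] by (simp add: stage_mult_eq)
  finally show ?thesis .
qed

lemma stage_mult_admissible:
  "expectation lower (\<lambda>x. stage_mult i sc (of_bool x) n) \<le> 1 \<and>
    expectation upper (\<lambda>x. stage_mult i sc (of_bool x) n) \<le> 1"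
proof (cases "some_good i sc n")
  case True
  then show ?thesis
    using max_good_spec(1)[OF True] by (simp add: stage_mult_eq good_def admissible_iff)
qed (simp add: stage_mult_eq expectation_def)

lemma stage_mult_bounded:
  "stage_mult i sc (of_bool x) n \<le> real ad / real an + real ad / real (ad - an)"
proof -
  have "lower * stage_mult i sc 1 n + (1 - lower) * stage_mult i sc 0 n \<le> 1"
    using stage_mult_admissible[of i sc n] by (simp add: expectation_def)
  then have "lower * stage_mult i sc 1 n \<le> 1" "(1 - lower) * stage_mult i sc 0 n \<le> 1"
    using lower_upper_bounds stage_mult_nonneg[of i sc] by (smt (verit) mult_nonneg_nonneg)+
  moreover have "1 - lower = real (ad - an) / real ad"
    using lower_less by (simp add: field_simps of_nat_diff)
  ultimately have "stage_mult i sc 1 n \<le> real ad / real an"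
    "stage_mult i sc 0 n \<le> real ad / real (ad - an)"
    using lower_pos lower_less by (simp_all add: field_simps)
  then show ?thesis
    by (cases x) (simp_all add: add_increasing2 add_increasing)
qed

lemma stage_mult_tendsto: "(\<lambda>n. stage_mult i sc (of_bool x) n) \<longlonglongrightarrow> limit_mult i sc (of_bool x)"
  unfolding limit_mult_def
proof (rule LIMSEQ_incseq_SUP)
  show "bdd_above (range (\<lambda>n. stage_mult i sc (of_bool x) n))"
    using stage_mult_bounded by (intro bdd_aboveI2) blast
  show "incseq (\<lambda>n. stage_mult i sc (of_bool x) n)"
    using stage_mult_mono by (simp add: incseq_def)
qed

lemma limit_mult_nonneg: "0 \<le> limit_mult i sc (of_bool x)"
  using LIMSEQ_le_const[OF stage_mult_tendsto] stage_mult_nonneg by blast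

lemma limit_mult_admissible:
  "expectation lower (\<lambda>x. limit_mult i sc (of_bool x)) \<le> 1 \<and>
    expectation upper (\<lambda>x. limit_mult i sc (of_bool x)) \<le> 1"
proof -
  have tendsto: "(\<lambda>n. expectation p (\<lambda>x. stage_mult i sc (of_bool x) n)) \<longlonglongrightarrow>
      expectation p (\<lambda>x. limit_mult i sc (of_bool x))" for p
    unfolding expectation_def by (intro tendsto_intros stage_mult_tendsto)
  have "expectation lower (\<lambda>x. limit_mult i sc (of_bool x)) \<le> 1"
    by (rule LIMSEQ_le_const2[OF tendsto]) (use stage_mult_admissible in blast)
  moreover have "expectation upper (\<lambda>x. limit_mult i sc (of_bool x)) \<le> 1"
    by (rule LIMSEQ_le_const2[OF tendsto]) (use stage_mult_admissible in blast)
  ultimately show ?thesis ..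
qed

context
  fixes i sc :: nat and f :: "bool \<Rightarrow> nat \<Rightarrow> real" and d :: "bool \<Rightarrow> real"
  assumes approx_eq: "\<And>x j n. approx_known i sc j n \<Longrightarrow> approx i sc (of_bool x) j n = f x j"
    and eventually_approx_known: "\<And>j. eventually (\<lambda>n. approx_known i sc j n) sequentially"
    and incseq_f: "\<And>x. incseq (f x)" and f_tendsto: "\<And>x. f x \<longlonglongrightarrow> d x"
    and d_admissible: "expectation lower d \<le> 1" "expectation upper d \<le> 1"
begin

lemma f_le_limit: "f x j \<le> d x"
  using incseq_le[OF incseq_f f_tendsto] .

lemma limit_nonneg: "0 \<le> d x"
proof -
  obtain n where "approx_known i sc 0 n"
    using eventually_approx_known[of 0] unfolding eventually_sequentially by blast
  then have "f x 0 = approx i sc (of_bool x) 0 n"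
    by (rule approx_eq[symmetric])
  then have "0 \<le> f x 0"
    using approx_nonneg by simp
  then show ?thesis
    using f_le_limit[of x 0] by linarith
qed

lemma best_approx_le_limit:
  assumes "known_upto i sc m n"
  shows "best_approx i sc (of_bool x) m n \<le> d x"
proof -
  have "approx_known i sc (best_index i sc (of_bool x) m n) n"
    using assms best_index_spec(1) unfolding known_upto_def by (simp add: le_imp_less_Suc)
  then have "best_approx i sc (of_bool x) m n = f x (best_index i sc (of_bool x) m n)"
    unfolding best_approx_def by (rule approx_eq)
  then show ?thesis
    using f_le_limit by simp
qed

lemma known_upto_imp_good:
  assumes "known_upto i sc m n"
  shows "good i sc m n"
proof -
  have le: "expectation p (\<lambda>x. best_approx i sc (of_bool x) m n) \<le> expectation p d"
    if "0 \<le> p" "p \<le> 1" for p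
    using that best_approx_le_limit[OF assms] by (rule expectation_mono)
  have "expectation lower (\<lambda>x. best_approx i sc (of_bool x) m n) \<le> expectation lower d"
    "expectation upper (\<lambda>x. best_approx i sc (of_bool x) m n) \<le> expectation upper d"
    using lower_upper_bounds by (auto intro: le)
  then show ?thesis
    unfolding good_def admissible_iff using assms d_admissible by auto
qed

lemma stage_mult_le_limit: "stage_mult i sc (of_bool x) n \<le> d x"
proof (cases "some_good i sc n")
  case True
  then show ?thesis
    using max_good_spec(1)[OF True] best_approx_le_limit by (simp add: stage_mult_eq good_def)
qed (simp add: stage_mult_eq limit_nonneg)

lemma eventually_known_upto: "eventually (\<lambda>n. known_upto i sc m n) sequentially"
proof -
  have "eventually (\<lambda>n. \<forall>j\<in>{..<Suc m}. approx_known i sc j n) sequentially"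
    using eventually_approx_known by (intro eventually_ball_finite) auto
  then show ?thesis
    unfolding known_upto_def by (rule eventually_mono) auto
qed

lemma eventually_le_stage_mult: "eventually (\<lambda>n. f x m \<le> stage_mult i sc (of_bool x) n) sequentially"
  using eventually_conj[OF eventually_known_upto eventually_ge_at_top[of m]]
proof (rule eventually_mono)
  fix n
  assume n: "known_upto i sc m n \<and> m \<le> n"
  then have some: "some_good i sc n"
    unfolding some_good_def using known_upto_imp_good le_imp_less_Suc by blast
  then have "m \<le> max_good i sc n" "known_upto i sc (max_good i sc n) n"
    using max_good_spec[OF some] known_upto_imp_good n by (auto simp: good_def)
  then have "approx i sc (of_bool x) m n \<le> best_approx i sc (of_bool x) (max_good i sc n) n"
    using best_index_spec(2) by blast
  moreover have "approx i sc (of_bool x) m n = f x m"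
    using n approx_eq unfolding known_upto_def by blast
  ultimately show "f x m \<le> stage_mult i sc (of_bool x) n"
    using some by (simp add: stage_mult_eq)
qed

lemma limit_mult_eq: "limit_mult i sc (of_bool x) = d x"
proof (rule antisym)
  show "limit_mult i sc (of_bool x) \<le> d x"
    using LIMSEQ_le_const2[OF stage_mult_tendsto] stage_mult_le_limit by blast
  have "f x m \<le> limit_mult i sc (of_bool x)" for m
    using tendsto_lowerbound[OF stage_mult_tendsto eventually_le_stage_mult] by simp
  then show "d x \<le> limit_mult i sc (of_bool x)"
    using LIMSEQ_le_const2[OF f_tendsto] by blast
qed

end

lemma enum_mult_nonneg: "nonneg_multiplier (enum_mult i)"
  unfolding nonneg_multiplier_def enum_mult_def using limit_mult_nonneg by blast

lemma enum_mult_supermartingale: "supermartingale_multiplier {lower..upper} (enum_mult i)"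
proof -
  have "enum_mult i s = (\<lambda>x. limit_mult i (str_code s) (of_bool x))" for s
    by (simp add: fun_eq_iff enum_mult_def)
  then show ?thesis
    using limit_mult_admissible lower_upper_bounds lower_le_upper
    by (simp add: supermartingale_multiplier_iff_endpoints)
qed

lemma enum_mult_lower_semicomputable: "lower_semicomputable_multiplier (enum_mult i)"
  unfolding lower_semicomputable_multiplier_def
proof (intro exI conjI allI)
  let ?g = "\<lambda>xs. of_nat (stage_num i (xs ! 0) (xs ! 1) (xs ! 2)) /
    of_nat (stage_den i (xs ! 0) (xs ! 1) (xs ! 2)) :: rat"
  show "recursive_rat 3 ?g"
    unfolding recursive_rat_def
    by (intro exI[of _ "\<lambda>xs. stage_num i (xs ! 0) (xs ! 1) (xs ! 2)"] exI[of _ "\<lambda>_. 0"]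
        exI[of _ "\<lambda>xs. stage_den i (xs ! 0) (xs ! 1) (xs ! 2) - 1"] conjI allI impI
        recursive_nat_const recursive_nat_diff recursive_intros
        recursive_nat_comp4[OF recursive_stage_num]
        recursive_nat_comp4[OF recursive_stage_den] | simp_all only: index_simps)+
      (use stage_den_pos in \<open>simp add: Suc_leI\<close>)
  have real_g: "real_of_rat (?g [str_code s, of_bool x, n]) = stage_mult i (str_code s) (of_bool x) n"
    for s x n
    by (simp add: stage_mult_def of_rat_divide)
  show "mono (\<lambda>n. ?g [str_code s, of_bool x, n])" for s x
  proof (rule monoI)
    fix n n' :: nat
    assume "n \<le> n'"
    then have "real_of_rat (?g [str_code s, of_bool x, n]) \<le>
        real_of_rat (?g [str_code s, of_bool x, n'])"
      unfolding real_g by (intro stage_mult_mono) simp_all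
    then show "?g [str_code s, of_bool x, n] \<le> ?g [str_code s, of_bool x, n']"
      by (simp only: of_rat_less_eq)
  qed
  show "(\<lambda>n. real_of_rat (?g [str_code s, of_bool x, n])) \<longlonglongrightarrow> enum_mult i s x" for s x
    unfolding real_g enum_mult_def by (rule stage_mult_tendsto)
qed (rule refl)

lemma enum_approx_eq_prod:
  "real_of_rat (enum_approx i s n) =
    (\<Prod>k<length s. stage_mult i (str_code (take k s)) (of_bool (s ! k)) n)"
  unfolding enum_approx_def stage_mult_def prod_num_def prod_den_def
  by (simp add: of_rat_divide of_rat_prod prod_dividef)

lemma enum_approx_tendsto: "(\<lambda>n. real_of_rat (enum_approx i s n)) \<longlonglongrightarrow> generated (enum_mult i) s"
  unfolding enum_approx_eq_prod generated_def enum_mult_def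
  by (intro tendsto_prod stage_mult_tendsto)

lemma enum_approx_mono: "mono (enum_approx i s)"
proof (rule monoI)
  fix n n' :: nat
  assume "n \<le> n'"
  then have "real_of_rat (enum_approx i s n) \<le> real_of_rat (enum_approx i s n')"
    unfolding enum_approx_eq_prod by (intro prod_mono) (simp add: stage_mult_nonneg stage_mult_mono)
  then show "enum_approx i s n \<le> enum_approx i s n'"
    by (simp add: of_rat_less_eq)
qed

lemma enum_approx_recursive:
  "\<exists>g. recursive_rat 3 g \<and> (\<forall>i s n. enum_approx i s n = g [i, str_code s, n])"
proof (intro exI conjI allI)
  let ?g = "\<lambda>xs. of_nat (prod_num (xs ! 0) (xs ! 1) (xs ! 2)) /
    of_nat (prod_den (xs ! 0) (xs ! 1) (xs ! 2)) :: rat"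
  have "0 < prod_den i sc n" for i sc n
    unfolding prod_den_def using stage_den_pos by (simp add: prod_pos)
  then show "recursive_rat 3 ?g"
    unfolding recursive_rat_def
    by (intro exI[of _ "\<lambda>xs. prod_num (xs ! 0) (xs ! 1) (xs ! 2)"] exI[of _ "\<lambda>_. 0"]
        exI[of _ "\<lambda>xs. prod_den (xs ! 0) (xs ! 1) (xs ! 2) - 1"] conjI allI impI
        recursive_prod_num recursive_nat_const recursive_nat_diff recursive_prod_den) simp
  show "enum_approx i s n = ?g [i, str_code s, n]" for i s n
    by (simp add: enum_approx_def)
qed

lemma enum_mult_surj:
  assumes "lower_semicomputable_multiplier D" "nonneg_multiplier D"
    and "supermartingale_multiplier {lower..upper} D"
  shows "\<exists>i. enum_mult i = D"
proof -
  obtain r i where r: "\<And>s x. mono (r s x)" "\<And>s x. (\<lambda>n. real_of_rat (r s x n)) \<longlonglongrightarrow> D s x"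
    and approx: "\<And>s x j n. approx_known i (str_code s) j n \<Longrightarrow>
      approx i (str_code s) (of_bool x) j n = max 0 (real_of_rat (r s x j))"
    and known: "\<And>s j. eventually (\<lambda>n. approx_known i (str_code s) j n) sequentially"
    by (rule lower_semicomputable_index[OF assms(1)], rule that)
  have "enum_mult i s x = D s x" for s x
    unfolding enum_mult_def
  proof (rule limit_mult_eq[OF approx known])
    show "incseq (\<lambda>j. max 0 (real_of_rat (r s x j)))" for x
    proof (rule incseq_SucI)
      fix j
      have "real_of_rat (r s x j) \<le> real_of_rat (r s x (Suc j))"
        using monoD[OF r(1), of j "Suc j"] by (simp add: of_rat_less_eq)
      then show "max 0 (real_of_rat (r s x j)) \<le> max 0 (real_of_rat (r s x (Suc j)))"
        by (rule max.mono[OF order_refl])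
    qed
    show "(\<lambda>j. max 0 (real_of_rat (r s x j))) \<longlonglongrightarrow> D s x" for x
    proof -
      have "(\<lambda>j. max 0 (real_of_rat (r s x j))) \<longlonglongrightarrow> max 0 (D s x)"
        by (intro tendsto_max tendsto_const r(2))
      moreover have "0 \<le> D s x"
        using assms(2) unfolding nonneg_multiplier_def by blast
      ultimately show ?thesis
        by (simp add: max_absorb2)
    qed
    show "expectation lower (D s) \<le> 1" "expectation upper (D s) \<le> 1"
      using assms(3) lower_upper_bounds lower_le_upper
      by (simp_all add: supermartingale_multiplier_iff_endpoints)
  qed
  then show ?thesis
    by blast
qed

lemma enum_approx_generates:
  "\<exists>D. lower_semicomputable_multiplier D \<and> nonneg_multiplier D \<and>
    supermartingale_multiplier {lower..upper} D \<and>
    (\<forall>s. (\<lambda>n. real_of_rat (enum_approx i s n)) \<longlonglongrightarrow> generated D s) \<and>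
    test_supermartingale {lower..upper} (generated D)"
proof (intro exI[of _ "enum_mult i"] conjI allI)
  show "test_supermartingale {lower..upper} (generated (enum_mult i))"
    using lower_upper_bounds lower_le_upper
    by (intro test_supermartingale_generated enum_mult_nonneg enum_mult_supermartingale) auto
qed (rule enum_mult_lower_semicomputable enum_mult_nonneg enum_mult_supermartingale
    enum_approx_tendsto)+

lemma enum_approx_covers:
  assumes "lower_semicomputable_multiplier D" "nonneg_multiplier D"
    and "supermartingale_multiplier {lower..upper} D"
  shows "\<exists>i. \<forall>s. (\<lambda>n. real_of_rat (enum_approx i s n)) \<longlonglongrightarrow> generated D s"
  using enum_mult_surj[OF assms] enum_approx_tendsto by blast

end

lemma rat_as_nat_frac:
  fixes a :: rat
  assumes "0 < a" "a < 1"
  obtains an ad :: nat where "0 < an" "an < ad" "real_of_rat a = real an / real ad"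
proof -
  obtain p q where pq: "quotient_of a = (p, q)"
    by (cases "quotient_of a")
  then have q: "0 < q" and a: "a = of_int p / of_int q"
    by (simp_all add: quotient_of_denom_pos quotient_of_div)
  then have "0 < p" "p < q"
    using assms by (simp_all add: zero_less_divide_iff divide_less_eq)
  moreover have "real_of_rat a = real (nat p) / real (nat q)"
    using q \<open>0 < p\<close> unfolding a by (simp add: of_rat_divide)
  ultimately show ?thesis
    by (intro that[of "nat p" "nat q"]) auto
qed

theorem corollary5:
  fixes a b :: rat
  assumes "0 < a" and "a \<le> b" and "b < 1"
  shows "\<exists>q :: nat \<Rightarrow> bool list \<Rightarrow> nat \<Rightarrow> rat.
     (\<exists>g. recursive_rat 3 g \<and> (\<forall>i s n. q i s n = g [i, str_code s, n])) \<and>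
     (\<forall>i s. mono (q i s)) \<and>
     (\<forall>i. \<exists>D. lower_semicomputable_multiplier D \<and> nonneg_multiplier D \<and>
              supermartingale_multiplier {real_of_rat a..real_of_rat b} D \<and>
              (\<forall>s. (\<lambda>n. real_of_rat (q i s n)) \<longlonglongrightarrow> generated D s) \<and>
              test_supermartingale {real_of_rat a..real_of_rat b} (generated D)) \<and>
     (\<forall>D. lower_semicomputable_multiplier D \<and> nonneg_multiplier D \<and>
              supermartingale_multiplier {real_of_rat a..real_of_rat b} D \<longrightarrow>
          (\<exists>i. \<forall>s. (\<lambda>n. real_of_rat (q i s n)) \<longlonglongrightarrow> generated D s))"
proof -
  obtain an ad where a: "0 < an" "an < ad" "real_of_rat a = real an / real ad"
    using rat_as_nat_frac[of a] assms by auto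
  obtain bn bd where b: "0 < bn" "bn < bd" "real_of_rat b = real bn / real bd"
    using rat_as_nat_frac[of b] assms by auto
  interpret rational_forecast an ad bn bd
    using a b assms(2) by unfold_locales (simp_all flip: a(3) b(3) add: of_rat_less_eq)
  show ?thesis
    unfolding a(3) b(3)
    by (intro exI[of _ enum_approx] conjI allI impI enum_approx_recursive enum_approx_mono
        enum_approx_generates enum_approx_covers) auto
qed

end
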